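(* For all probability measures $\nu$ on $\mathcal{G}$: (a) $\Gamma^{\nu}$ is a standard extensive game with perfect recall; and (b) if $\nu$ gives positive probability to all games in $\mathcal{G}$, then $\vec{\sigma}$ is a Nash equilibrium of $\Gamma^\nu$ iff $\vec{\sigma}'$ is a generalized Nash equilibrium of $\Gamma^*$, where $\sigma_{i,\Gamma'}(\langle\Gamma^h\rangle\cdot h')=\sigma'_{i,\Gamma'}(\Gamma^h,h')$.
   Context: Let $\Gamma^* = (\mathcal{G}, \Gamma^m, \mathcal{F})$ be a game with awareness based on a finite standard extensive game $\Gamma$ with perfect recall: $\mathcal{G}$ is a countable set of augmented games based on $\Gamma$ (each augmented game is a finite extensive game with perfect recall, with histories $\mathcal{H}'$, player function $P'$, nature's probabilities $f'_c$, information partitions, utilities $u'_i$, and awareness functions), $\Gamma^m \in \mathcal{G}$ is the modeler's game, and $\mathcal{F}$ maps each pair $(\Gamma^+,h)$ with $\Gamma^+\in\mathcal{G}$ and $P^+(h)=i$ to a pair $(\Gamma^h,I)$ with $\Gamma^h\in\mathcal{G}$ and $I$ an $i$-information set of $\Gamma^h$ (the game $i$ believes is being played at $h$, and the histories he considers possible); $\mathcal{F}$ satisfies consistency conditions including a perfect-recall condition: for all $h'\in I$, there is a prefix $h'_1$ of $h'$ with $P^h(h'_1)=i$ and $\mathcal{F}(\Gamma^h,h'_1)=(\Gamma'',I'')$ iff there is a prefix $h_1$ of $h$ with $P^+(h_1)=i$ and $\mathcal{F}(\Gamma^+,h_1)=(\Gamma'',I'')$, and $h'_1\cdot\langle m\rangle$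 is a prefix of $h'$ iff $h_1\cdot\langle m\rangle$ is a prefix of $h$. Let $\mathcal{G}_i$ be the set of games $\Gamma'\in\mathcal{G}$ such that $\mathcal{F}(\Gamma^+,h)=(\Gamma',\cdot)$ for some $\Gamma^+\in\mathcal{G}$ and $h$ with $P^+(h)=i$. Write $(\Gamma_1,h_1)\sim_i(\Gamma_2,h_2)$ if $\mathcal{F}(\Gamma_1,h_1)=\mathcal{F}(\Gamma_2,h_2)$. A local strategy $\sigma_{i,\Gamma'}$ maps each pair $(\Gamma^+,h)$ with $P^+(h)=i$ and $\mathcal{F}(\Gamma^+,h)=(\Gamma',I)$ to a probability distribution over the moves available at histories in $I$, constant on $\sim_i$-classes. A generalized strategy profile is $\vec{\sigma}'=\{\sigma'_{i,\Gamma'}: i\in N, \Gamma'\in\mathcal{G}_i\}$; it is a generalized Nash equilibrium if for every $i$, $\Gamma'\in\mathcal{G}_i$ and local strategy $\sigma$ for $i$ in $\Gamma'$, $EU_{i,\Gamma'}(\vec{\sigma}')\ge EU_{i,\Gamma'}((\vec{\sigma}'_{-(i,\Gamma')},\sigma))$, where $EU_{i,\Gamma'}$ is $i$'s expected payoff in $\Gamma'$. For $\Gamma'\in\mathcal{G}$ let $\lfloor \mathcal{H}'\rfloor$ be the set of $h\in\mathcal{H}'$ such that for every prefix $h_1\cdot\langle m\rangle$ of $h$, if $P'(h_1)=i\in N$ and $\mathcal{F}(\Gamma',h_1)=(\Gamma'',I)$ then $h_2\cdot\langle m\rangle\in\mathcal{H}''$ for all $h_2\in I$. Given a probability measure $\nu$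 on $\mathcal{G}$, $\Gamma^\nu$ is the standard game with: players $N^\nu=\{(i,\Gamma'):\Gamma'\in\mathcal{G}_i\}$; moves $\mathcal{G}$ together with all moves occurring in the $\lfloor\mathcal{H}'\rfloor$; histories $\langle\,\rangle$ and $\langle\Gamma'\rangle\cdot h$ for $\Gamma'\in\mathcal{G}$, $h\in\lfloor\mathcal{H}'\rfloor$; $P^\nu(\langle\,\rangle)=c$, $P^\nu(\langle\Gamma^h\rangle\cdot h')=(i,\Gamma^{h'})$ if $P^h(h')=i\in N$ and $\mathcal{F}(\Gamma^h,h')=(\Gamma^{h'},\cdot)$, and $=c$ if $P^h(h')=c$; $f^\nu_c(\Gamma'\mid\langle\,\rangle)=\nu(\Gamma')$ and $f^\nu_c(\cdot\mid\langle\Gamma^h\rangle\cdot h')=f^h_c(\cdot\mid h')$ when $P^h(h')=c$; the information sets of player $(i,\Gamma')$ are the $\sim_i$-classes restricted to histories where $i$ moves and $\mathcal{F}$ has the form $(\Gamma',\cdot)$; and $u^\nu_{i,\Gamma'}(\langle\Gamma^h\rangle\cdot z)=u^h_i(z)$ if $\Gamma^h=\Gamma'$ and $0$ otherwise. *)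

theory Defs
  imports "HOL-Analysis.Analysis" "HOL-Probability.Probability_Mass_Function" "HOL-Library.Sublist"
begin

text \<open>Histories are finite lists of moves.  plr h = None means that nature (chance, c)
  moves at h; plr h = Some i means player i moves at h.  chance h is nature's
  probability distribution f_c(. | h); infosets i is the information partition of
  player i; util i is player i's payoff on terminal histories.\<close>

record ('i, 'm) egame =
  players  :: "'i set"
  hist     :: "'m list set"
  plr      :: "'m list \<Rightarrow> 'i option"
  chance   :: "'m list \<Rightarrow> 'm \<Rightarrow> real"
  infosets :: "'i \<Rightarrow> 'm list set set"
  util     :: "'i \<Rightarrow> 'm list \<Rightarrow> real"

definition moves :: "('i, 'm, 'x) egame_scheme \<Rightarrow> 'm list \<Rightarrow> 'm set" where
  "moves g h = {m. h @ [m] \<in> hist g}"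

definition terminal :: "('i, 'm, 'x) egame_scheme \<Rightarrow> 'm list \<Rightarrow> bool" where
  "terminal g h \<longleftrightarrow> h \<in> hist g \<and> moves g h = {}"

definition nonterm :: "('i, 'm, 'x) egame_scheme \<Rightarrow> 'm list \<Rightarrow> bool" where
  "nonterm g h \<longleftrightarrow> h \<in> hist g \<and> moves g h \<noteq> {}"

definition dp :: "('i, 'm, 'x) egame_scheme \<Rightarrow> 'i \<Rightarrow> 'm list \<Rightarrow> bool" where
  "dp g i h \<longleftrightarrow> nonterm g h \<and> plr g h = Some i"

definition is_dist :: "'m set \<Rightarrow> ('m \<Rightarrow> real) \<Rightarrow> bool" where
  "is_dist A p \<longleftrightarrow> (\<forall>m. 0 \<le> p m) \<and> (\<forall>m. p m \<noteq> 0 \<longrightarrow> m \<in> A) \<and> (p has_sum 1) A"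

definition std_game :: "('i, 'm, 'x) egame_scheme \<Rightarrow> bool" where
  "std_game g \<longleftrightarrow>
     [] \<in> hist g
   \<and> (\<forall>h m. h @ [m] \<in> hist g \<longrightarrow> h \<in> hist g)
   \<and> \<not> (\<exists>p :: nat \<Rightarrow> 'm. \<forall>n. map p [0..<n] \<in> hist g)
   \<and> (\<forall>h. nonterm g h \<longrightarrow>
          (case plr g h of None \<Rightarrow> is_dist (moves g h) (chance g h)
                         | Some i \<Rightarrow> i \<in> players g))
   \<and> (\<forall>i \<in> players g.
          (\<forall>I \<in> infosets g i. I \<noteq> {})
        \<and> \<Union> (infosets g i) = {h. dp g i h}
        \<and> (\<forall>I \<in> infosets g i. \<forall>J \<in> infosets g i. I \<noteq> J \<longrightarrow> I \<inter> J = {})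
        \<and> (\<forall>I \<in> infosets g i. \<forall>h \<in> I. \<forall>h' \<in> I. moves g h = moves g h'))"

definition is_infoset :: "('i, 'm, 'x) egame_scheme \<Rightarrow> 'i \<Rightarrow> 'm list set \<Rightarrow> bool" where
  "is_infoset g i I \<longleftrightarrow> i \<in> players g \<and> I \<in> infosets g i"

definition info_of :: "('i, 'm, 'x) egame_scheme \<Rightarrow> 'i \<Rightarrow> 'm list \<Rightarrow> 'm list set" where
  "info_of g i h = (THE I. I \<in> infosets g i \<and> h \<in> I)"

definition experience :: "('i, 'm, 'x) egame_scheme \<Rightarrow> 'i \<Rightarrow> 'm list \<Rightarrow> ('m list set \<times> 'm) list" where
  "experience g i h =
     map (\<lambda>k. (info_of g i (take k h), h ! k))
         (filter (\<lambda>k. plr g (take k h) = Some i) [0..<length h])"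

definition perfect_recall :: "('i, 'm, 'x) egame_scheme \<Rightarrow> bool" where
  "perfect_recall g \<longleftrightarrow>
     (\<forall>i \<in> players g. \<forall>I \<in> infosets g i. \<forall>h \<in> I. \<forall>h' \<in> I.
        experience g i h = experience g i h')"

definition behavioral :: "('i, 'm, 'x) egame_scheme \<Rightarrow> 'i \<Rightarrow> ('m list \<Rightarrow> 'm \<Rightarrow> real) \<Rightarrow> bool" where
  "behavioral g i s \<longleftrightarrow>
     (\<forall>h. dp g i h \<longrightarrow> is_dist (moves g h) (s h))
   \<and> (\<forall>I \<in> infosets g i. \<forall>h \<in> I. \<forall>h' \<in> I. s h = s h')"

definition profile :: "('i, 'm, 'x) egame_scheme \<Rightarrow> ('i \<Rightarrow> 'm list \<Rightarrow> 'm \<Rightarrow> real) \<Rightarrow> bool" where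
  "profile g \<sigma> \<longleftrightarrow> (\<forall>i \<in> players g. behavioral g i (\<sigma> i))"

definition reach :: "('i, 'm, 'x) egame_scheme \<Rightarrow> ('i \<Rightarrow> 'm list \<Rightarrow> 'm \<Rightarrow> real) \<Rightarrow> 'm list \<Rightarrow> real" where
  "reach g \<sigma> h = (\<Prod>k<length h.
      (case plr g (take k h) of None \<Rightarrow> chance g (take k h) (h ! k)
                              | Some i \<Rightarrow> \<sigma> i (take k h) (h ! k)))"

definition EU :: "('i, 'm, 'x) egame_scheme \<Rightarrow> ('i \<Rightarrow> 'm list \<Rightarrow> 'm \<Rightarrow> real) \<Rightarrow> 'i \<Rightarrow> real" where
  "EU g \<sigma> i = (\<Sum>\<^sub>\<infinity>z \<in> {z. terminal g z}. reach g \<sigma> z * util g i z)"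

definition nash :: "('i, 'm, 'x) egame_scheme \<Rightarrow> ('i \<Rightarrow> 'm list \<Rightarrow> 'm \<Rightarrow> real) \<Rightarrow> bool" where
  "nash g \<sigma> \<longleftrightarrow> profile g \<sigma> \<and>
     (\<forall>i \<in> players g. \<forall>s. behavioral g i s \<longrightarrow> EU g (\<sigma>(i := s)) i \<le> EU g \<sigma> i)"

type_synonym ('i, 'm) awF = "('i, 'm) egame \<Rightarrow> 'm list \<Rightarrow> ('i, 'm) egame \<times> 'm list set"

text \<open>Augmented game based on the underlying game (awareness functions omitted).\<close>
definition aug_game :: "('i, 'm) egame \<Rightarrow> ('i, 'm) egame \<Rightarrow> bool" where
  "aug_game \<Gamma> g \<longleftrightarrow> std_game g \<and> finite (hist g) \<and> perfect_recall g \<and> players g \<subseteq> players \<Gamma>"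

definition awareness_game ::
  "('i, 'm) egame \<Rightarrow> ('i, 'm) egame set \<Rightarrow> ('i, 'm) egame \<Rightarrow> ('i, 'm) awF \<Rightarrow> bool" where
  "awareness_game \<Gamma> G Gm F \<longleftrightarrow>
     std_game \<Gamma> \<and> finite (hist \<Gamma>) \<and> perfect_recall \<Gamma>
   \<and> countable G \<and> Gm \<in> G \<and> (\<forall>g \<in> G. aug_game \<Gamma> g)
   \<and> (\<forall>gp \<in> G. \<forall>i h. dp gp i h \<longrightarrow>
        (let gh = fst (F gp h); I = snd (F gp h) in
           gh \<in> G \<and> is_infoset gh i I
         \<comment> \<open>moves player i considers possible are actually available\<close>
         \<and> (\<forall>h' \<in> I. moves gh h' \<subseteq> moves gp h)
         \<comment> \<open>perfect recall condition on F\<close>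
         \<and> (\<forall>h' \<in> I.
              (\<forall>g'' I''.
                 (\<exists>h1'. prefix h1' h' \<and> dp gh i h1' \<and> F gh h1' = (g'', I''))
                 \<longleftrightarrow> (\<exists>h1. prefix h1 h \<and> dp gp i h1 \<and> F gp h1 = (g'', I'')))
            \<and> (\<forall>h1' h1 g'' I'' m.
                 prefix h1' h' \<and> dp gh i h1' \<and> F gh h1' = (g'', I'')
               \<and> prefix h1 h \<and> dp gp i h1 \<and> F gp h1 = (g'', I'')
               \<longrightarrow> (prefix (h1' @ [m]) h' \<longleftrightarrow> prefix (h1 @ [m]) h)))))"

definition Gi :: "('i, 'm) egame set \<Rightarrow> ('i, 'm) awF \<Rightarrow> 'i \<Rightarrow> ('i, 'm) egame set" where
  "Gi G F i = {g'. \<exists>gp \<in> G. \<exists>h. dp gp i h \<and> fst (F gp h) = g'}"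

definition local_strategy ::
  "('i, 'm) egame set \<Rightarrow> ('i, 'm) awF \<Rightarrow> 'i \<Rightarrow> ('i, 'm) egame
     \<Rightarrow> (('i, 'm) egame \<Rightarrow> 'm list \<Rightarrow> 'm \<Rightarrow> real) \<Rightarrow> bool" where
  "local_strategy G F i g' s \<longleftrightarrow>
     (\<forall>gp \<in> G. \<forall>h. dp gp i h \<and> fst (F gp h) = g' \<longrightarrow>
        is_dist {m. \<forall>h2 \<in> snd (F gp h). h2 @ [m] \<in> hist g'} (s gp h))
   \<and> (\<forall>g1 \<in> G. \<forall>g2 \<in> G. \<forall>h1 h2.
        dp g1 i h1 \<and> dp g2 i h2 \<and> fst (F g1 h1) = g' \<and> F g1 h1 = F g2 h2
        \<longrightarrow> s g1 h1 = s g2 h2)"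

type_synonym ('i, 'm) gprofile = "'i \<Rightarrow> ('i, 'm) egame \<Rightarrow> ('i, 'm) egame \<Rightarrow> 'm list \<Rightarrow> 'm \<Rightarrow> real"

definition gen_profile ::
  "('i, 'm) egame \<Rightarrow> ('i, 'm) egame set \<Rightarrow> ('i, 'm) awF \<Rightarrow> ('i, 'm) gprofile \<Rightarrow> bool" where
  "gen_profile \<Gamma> G F \<sigma>' \<longleftrightarrow>
     (\<forall>i \<in> players \<Gamma>. \<forall>g' \<in> Gi G F i. local_strategy G F i g' (\<sigma>' i g'))"

definition greach :: "('i, 'm) awF \<Rightarrow> ('i, 'm) egame \<Rightarrow> ('i, 'm) gprofile \<Rightarrow> 'm list \<Rightarrow> real" where
  "greach F g' \<sigma>' h = (\<Prod>k<length h.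
      (case plr g' (take k h) of None \<Rightarrow> chance g' (take k h) (h ! k)
         | Some j \<Rightarrow> \<sigma>' j (fst (F g' (take k h))) g' (take k h) (h ! k)))"

definition GEU :: "('i, 'm) awF \<Rightarrow> ('i, 'm) egame \<Rightarrow> ('i, 'm) gprofile \<Rightarrow> 'i \<Rightarrow> real" where
  "GEU F g' \<sigma>' i = (\<Sum>z \<in> {z. terminal g' z}. greach F g' \<sigma>' z * util g' i z)"

definition gen_nash ::
  "('i, 'm) egame \<Rightarrow> ('i, 'm) egame set \<Rightarrow> ('i, 'm) awF \<Rightarrow> ('i, 'm) gprofile \<Rightarrow> bool" where
  "gen_nash \<Gamma> G F \<sigma>' \<longleftrightarrow> gen_profile \<Gamma> G F \<sigma>' \<and>
     (\<forall>i \<in> players \<Gamma>. \<forall>g' \<in> Gi G F i. \<forall>s. local_strategy G F i g' s \<longrightarrow>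
        GEU F g' (\<sigma>'(i := (\<sigma>' i)(g' := s))) i \<le> GEU F g' \<sigma>' i)"

definition floor_hist :: "('i, 'm) awF \<Rightarrow> ('i, 'm) egame \<Rightarrow> 'm list set" where
  "floor_hist F g' = {h \<in> hist g'. \<forall>h1 m. prefix (h1 @ [m]) h \<longrightarrow>
      (\<forall>i. plr g' h1 = Some i \<longrightarrow>
         (\<forall>h2 \<in> snd (F g' h1). h2 @ [m] \<in> hist (fst (F g' h1))))}"

type_synonym ('i, 'm) numove = "('i, 'm) egame + 'm"

text \<open>Histories of \<Gamma>^\<nu> are <> and Inl \<Gamma>' # map Inr h; decoding the tail:\<close>
definition dec :: "('i, 'm) numove list \<Rightarrow> 'm list" where
  "dec xs = map projr xs"

definition nu_class ::
  "('i, 'm) egame set \<Rightarrow> ('i, 'm) awF \<Rightarrow> 'i \<Rightarrow> ('i, 'm) egame \<times> 'm list set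
     \<Rightarrow> ('i, 'm) numove list set" where
  "nu_class G F i v = {Inl g2 # map Inr h2 | g2 h2.
      g2 \<in> G \<and> h2 \<in> floor_hist F g2 \<and> dp g2 i h2 \<and> F g2 h2 = v}"

definition nu_game ::
  "('i, 'm) egame \<Rightarrow> ('i, 'm) egame set \<Rightarrow> ('i, 'm) awF \<Rightarrow> ('i, 'm) egame pmf
     \<Rightarrow> ('i \<times> ('i, 'm) egame, ('i, 'm) numove) egame" where
  "nu_game \<Gamma> G F \<nu> =
    \<lparr> players = {(i, g'). i \<in> players \<Gamma> \<and> g' \<in> Gi G F i},
      hist = {[]} \<union> {Inl g' # map Inr h | g' h. g' \<in> G \<and> h \<in> floor_hist F g'},
      plr = (\<lambda>hh. case hh of [] \<Rightarrow> None
               | x # rest \<Rightarrow> (case x of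
                   Inl gh \<Rightarrow> (case plr gh (dec rest) of None \<Rightarrow> None
                               | Some i \<Rightarrow> Some (i, fst (F gh (dec rest))))
                 | Inr _ \<Rightarrow> None)),
      chance = (\<lambda>hh mv. case hh of
                 [] \<Rightarrow> (case mv of Inl g' \<Rightarrow> pmf \<nu> g' | Inr _ \<Rightarrow> 0)
               | x # rest \<Rightarrow> (case x of
                   Inl gh \<Rightarrow> (case mv of Inr m \<Rightarrow> chance gh (dec rest) m | Inl _ \<Rightarrow> 0)
                 | Inr _ \<Rightarrow> 0)),
      infosets = (\<lambda>(i, g'). {nu_class G F i (F g1 h1) | g1 h1.
                    g1 \<in> G \<and> h1 \<in> floor_hist F g1 \<and> dp g1 i h1 \<and> fst (F g1 h1) = g'}),
      util = (\<lambda>(i, g') hh. case hh of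
                 x # rest \<Rightarrow> (case x of Inl gh \<Rightarrow> (if gh = g' then util gh i (dec rest) else 0)
                                     | Inr _ \<Rightarrow> 0)
               | [] \<Rightarrow> 0) \<rparr>"

definition corresponds ::
  "('i, 'm) egame set \<Rightarrow> ('i, 'm) awF
     \<Rightarrow> ('i \<times> ('i, 'm) egame \<Rightarrow> ('i, 'm) numove list \<Rightarrow> ('i, 'm) numove \<Rightarrow> real)
     \<Rightarrow> ('i, 'm) gprofile \<Rightarrow> bool" where
  "corresponds G F \<sigma> \<sigma>' \<longleftrightarrow>
     (\<forall>i g' gh h'. gh \<in> G \<and> h' \<in> floor_hist F gh \<and> dp gh i h' \<and> fst (F gh h') = g'
        \<longrightarrow> \<sigma> (i, g') (Inl gh # map Inr h')
              = (\<lambda>mv. case mv of Inr m \<Rightarrow> \<sigma>' i g' gh h' m | Inl _ \<Rightarrow> 0))"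

end

theory Submission
  imports Defs
begin

text \<open>
  \<Gamma>^\<nu> first lets chance pick the game g \<in> G according to \<nu> and then plays g, restricted
  to the histories (the floor of g) along which every mover takes only moves that are available
  in the game he believes he is playing.  The agent (i, g') of \<Gamma>^\<nu> plays for i whenever i
  believes he is playing g', and its information sets collect the histories carrying the same belief
  F g h.  Since F remembers earlier beliefs and the moves taken after them, histories with the
  same belief carry the same sequence of beliefs and moves of i, which gives perfect recall.

  Agent (i, g') is paid only in g', and histories of g' leaving the floor have probability zero
  under local strategies, so its expected payoff is pmf \<nu> g' times the generalized expected
  utility of i in g'.  Behavioural strategies of (i, g') and local strategies of i for g' translate
  into each other, hence, when \<nu> is positive on G, the two equilibrium conditions coincide.
\<close>

lemma prefix_eq_take: "prefix p h \<Longrightarrow> p = take (length p) h"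
  by (auto simp: prefix_def)

lemma strict_prefix_take: "k < length h \<Longrightarrow> strict_prefix (take k h) h"
  by (metis length_take min.absorb4 nat_less_le take_is_prefix prefix_order.le_neq_trans)

lemma strict_prefix_snoc_nth: "strict_prefix p h \<Longrightarrow> prefix (p @ [h ! length p]) h"
  by (metis prefix_def prefix_length_less prefix_order.less_imp_le take_Suc_conv_app_nth
      take_is_prefix append_eq_conv_conj)

lemma prefix_snoc_nth: "prefix (p @ [m]) h \<Longrightarrow> h ! length p = m"
  by (auto simp: prefix_def nth_append)

lemma ex_maximal_strict_prefix:
  assumes "strict_prefix p h" "P p"
  obtains q where "strict_prefix q h" "P q" "\<And>r. strict_prefix q r \<Longrightarrow> strict_prefix r h \<Longrightarrow> \<not> P r"
proof -
  obtain q where q: "strict_prefix q h \<and> P q"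
    and max: "\<And>r. strict_prefix r h \<and> P r \<Longrightarrow> length r \<le> length q"
    using ex_has_greatest_nat[of "\<lambda>r. strict_prefix r h \<and> P r" p length "length h"]
      assms prefix_length_less by blast
  show thesis
    using that q max prefix_length_less by (metis leD)
qed

lemma strict_prefix_take_take: "k < k' \<Longrightarrow> k' \<le> length h \<Longrightarrow> strict_prefix (take k h) (take k' h)"
  using strict_prefix_take[of k "take k' h"] by (simp add: min_def)

abbreviation on_Inr :: "('b \<Rightarrow> real) \<Rightarrow> 'a + 'b \<Rightarrow> real" where
  "on_Inr p \<equiv> case_sum (\<lambda>_. 0) p"

lemma is_dist_pmf:
  assumes "set_pmf p \<subseteq> A"
  shows "is_dist A (pmf p)"
proof -
  have "infsum (pmf p) A = 1"
    using assms infsetsum_infsum[OF pmf_abs_summable] infsetsum_pmf_eq_1 by metis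
  moreover have "pmf p summable_on A"
    using abs_summable_summable abs_summable_equivalent pmf_abs_summable by blast
  ultimately show ?thesis
    using assms unfolding is_dist_def by (metis has_sum_infsum pmf_nonneg set_pmf_iff subsetD)
qed

lemma is_dist_on_Inr: "is_dist (Inr ` A) (on_Inr p) \<longleftrightarrow> is_dist A p"
proof -
  have "(on_Inr p has_sum 1) (Inr ` A) \<longleftrightarrow> (p has_sum 1) A"
    using has_sum_reindex[of Inr A "on_Inr p" 1] by (simp add: comp_def)
  then show ?thesis unfolding is_dist_def by (auto split: sum.splits)
qed

lemma is_dist_on_Inl: "is_dist (Inl ` A) (case_sum p (\<lambda>_. 0)) \<longleftrightarrow> is_dist A p"
proof -
  have "(case_sum p (\<lambda>_. 0) has_sum 1) (Inl ` A) \<longleftrightarrow> (p has_sum 1) A"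
    using has_sum_reindex[of Inl A "case_sum p (\<lambda>_. 0)" 1] by (simp add: comp_def)
  then show ?thesis unfolding is_dist_def by (auto split: sum.splits)
qed

lemma is_dist_Inr_image_eq: "is_dist (Inr ` A) q \<Longrightarrow> q = on_Inr (q \<circ> Inr)"
  unfolding is_dist_def by (rule ext, case_tac x) auto

lemma std_game_Nil: "std_game g \<Longrightarrow> [] \<in> hist g"
  unfolding std_game_def by (elim conjE)

lemma hist_snoc_closed:
  assumes "std_game g" "h @ [m] \<in> hist g"
  shows "h \<in> hist g"
proof -
  have "\<forall>h m. h @ [m] \<in> hist g \<longrightarrow> h \<in> hist g"
    using assms(1) unfolding std_game_def by (elim conjE)
  then show ?thesis using assms(2) by blast
qed

lemma std_game_nonterm:
  assumes "std_game g" "nonterm g h"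
  shows std_game_chance: "plr g h = None \<Longrightarrow> is_dist (moves g h) (chance g h)"
    and std_game_player: "plr g h = Some i \<Longrightarrow> i \<in> players g"
proof -
  have "\<forall>h. nonterm g h \<longrightarrow> (case plr g h of None \<Rightarrow> is_dist (moves g h) (chance g h)
                                           | Some i \<Rightarrow> i \<in> players g)"
    using assms(1) unfolding std_game_def by (elim conjE)
  then have "case plr g h of None \<Rightarrow> is_dist (moves g h) (chance g h) | Some i \<Rightarrow> i \<in> players g"
    using assms(2) by blast
  then show "plr g h = None \<Longrightarrow> is_dist (moves g h) (chance g h)" "plr g h = Some i \<Longrightarrow> i \<in> players g"
    by simp_all
qed

lemma hist_prefix_closed:
  assumes "std_game g" "h \<in> hist g" "prefix p h"
  shows "p \<in> hist g"
  using assms(2,3)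
proof (induction h arbitrary: p rule: rev_induct)
  case Nil
  then show ?case using std_game_Nil[OF assms(1)] by simp
next
  case (snoc m h)
  then show ?case using hist_snoc_closed[OF assms(1)] by (auto simp: prefix_snoc)
qed

lemma dp_hist: "dp g i h \<Longrightarrow> h \<in> hist g"
  by (simp add: dp_def nonterm_def)

lemma dp_moves_nonempty: "dp g i h \<Longrightarrow> moves g h \<noteq> {}"
  by (simp add: dp_def nonterm_def)

lemma dp_strict_prefix:
  assumes "std_game g" "h \<in> hist g" "strict_prefix p h" "plr g p = Some i"
  shows "dp g i p"
proof -
  have "p @ [h ! length p] \<in> hist g"
    using hist_prefix_closed[OF assms(1,2) strict_prefix_snoc_nth[OF assms(3)]] .
  then have "p \<in> hist g" "moves g p \<noteq> {}"
    using hist_snoc_closed[OF assms(1)] unfolding moves_def by auto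
  then show ?thesis using assms(4) by (simp add: dp_def nonterm_def)
qed

lemma dp_player: "std_game g \<Longrightarrow> dp g i h \<Longrightarrow> i \<in> players g"
  unfolding dp_def by (auto intro: std_game_player)

lemma
  assumes "std_game g" "is_infoset g i I"
  shows infoset_nonempty: "I \<noteq> {}"
    and infoset_dp: "h \<in> I \<Longrightarrow> dp g i h"
    and infoset_moves_eq: "h \<in> I \<Longrightarrow> h' \<in> I \<Longrightarrow> moves g h = moves g h'"
proof -
  have I: "I \<in> infosets g i" "i \<in> players g" using assms(2) by (simp_all add: is_infoset_def)
  have "\<forall>i \<in> players g. (\<forall>I \<in> infosets g i. I \<noteq> {})
        \<and> \<Union> (infosets g i) = {h. dp g i h}
        \<and> (\<forall>I \<in> infosets g i. \<forall>J \<in> infosets g i. I \<noteq> J \<longrightarrow> I \<inter> J = {})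
        \<and> (\<forall>I \<in> infosets g i. \<forall>h \<in> I. \<forall>h' \<in> I. moves g h = moves g h')"
    using assms(1) unfolding std_game_def by (elim conjE)
  from this I(2) have all: "(\<forall>I \<in> infosets g i. I \<noteq> {}) \<and> \<Union> (infosets g i) = {h. dp g i h}
        \<and> (\<forall>I \<in> infosets g i. \<forall>J \<in> infosets g i. I \<noteq> J \<longrightarrow> I \<inter> J = {})
        \<and> (\<forall>I \<in> infosets g i. \<forall>h \<in> I. \<forall>h' \<in> I. moves g h = moves g h')"
    by (rule bspec)
  note ne = conjunct1[OF all] and U = conjunct1[OF conjunct2[OF all]]
    and M = conjunct2[OF conjunct2[OF conjunct2[OF all]]]
  show "I \<noteq> {}" using ne I(1) by (rule bspec)
  show "h \<in> I \<Longrightarrow> dp g i h" using UnionI[OF I(1), of h] U by simp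
  show "h \<in> I \<Longrightarrow> h' \<in> I \<Longrightarrow> moves g h = moves g h'" using M I(1) by blast
qed

subsection \<open>Histories consistent with the players' beliefs\<close>

definition perceived_moves :: "('i, 'm) egame \<times> 'm list set \<Rightarrow> 'm set" where
  "perceived_moves v = {m. \<forall>h' \<in> snd v. h' @ [m] \<in> hist (fst v)}"

lemma floor_hist_subset: "floor_hist F g \<subseteq> hist g"
  by (auto simp: floor_hist_def)

lemma floor_hist_Nil: "[] \<in> hist g \<Longrightarrow> [] \<in> floor_hist F g"
  by (simp add: floor_hist_def)

lemma floor_hist_prefix_closed:
  assumes "std_game g" "h \<in> floor_hist F g" "prefix p h"
  shows "p \<in> floor_hist F g"
proof -
  have "p \<in> hist g" using hist_prefix_closed[OF assms(1) _ assms(3)] assms(2) floor_hist_subset by blast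
  moreover have "\<forall>i. plr g h1 = Some i \<longrightarrow> (\<forall>h2 \<in> snd (F g h1). h2 @ [m] \<in> hist (fst (F g h1)))"
    if "prefix (h1 @ [m]) p" for h1 m
    using assms(2) prefix_order.trans[OF that assms(3)] unfolding floor_hist_def by blast
  ultimately show ?thesis unfolding floor_hist_def by blast
qed

lemma floor_hist_snoc_iff:
  assumes "h \<in> floor_hist F g"
  shows "h @ [m] \<in> floor_hist F g \<longleftrightarrow>
     h @ [m] \<in> hist g \<and> (\<forall>i. plr g h = Some i \<longrightarrow> m \<in> perceived_moves (F g h))"
    (is "_ \<longleftrightarrow> _ \<and> ?perceived h m")
proof
  assume "h @ [m] \<in> floor_hist F g"
  then show "h @ [m] \<in> hist g \<and> ?perceived h m"
    unfolding floor_hist_def perceived_moves_def by blast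
next
  assume R: "h @ [m] \<in> hist g \<and> ?perceived h m"
  have "?perceived h1 m'" if "prefix (h1 @ [m']) (h @ [m])" for h1 m'
  proof -
    from that have "h1 @ [m'] = h @ [m] \<or> prefix (h1 @ [m']) h" by (simp only: prefix_snoc)
    then show ?thesis using R assms unfolding floor_hist_def perceived_moves_def by auto
  qed
  then show "h @ [m] \<in> floor_hist F g" using R unfolding floor_hist_def perceived_moves_def by blast
qed

lemma floor_hist_moves_chance:
  assumes "h \<in> floor_hist F g" "plr g h = None"
  shows "{m. h @ [m] \<in> floor_hist F g} = moves g h"
  using floor_hist_snoc_iff[OF assms(1)] assms(2) unfolding moves_def by auto

lemma dec_map_Inr [simp]: "dec (map Inr h) = h"
  by (simp add: dec_def comp_def)

lemma hist_nu_game: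
  "hist (nu_game \<Gamma> G F \<nu>) = {[]} \<union> {Inl g # map Inr h | g h. g \<in> G \<and> h \<in> floor_hist F g}"
  by (simp add: nu_game_def)

lemma Inl_Cons_in_hist_nu_game:
  "Inl g # map Inr h \<in> hist (nu_game \<Gamma> G F \<nu>) \<longleftrightarrow> g \<in> G \<and> h \<in> floor_hist F g"
  by (auto simp: hist_nu_game)

lemma hist_nu_game_cases:
  assumes "hh \<in> hist (nu_game \<Gamma> G F \<nu>)"
  obtains "hh = []" | g h where "hh = Inl g # map Inr h" "g \<in> G" "h \<in> floor_hist F g"
  using assms by (auto simp: hist_nu_game)

lemma plr_nu_game_Nil [simp]: "plr (nu_game \<Gamma> G F \<nu>) [] = None"
  by (simp add: nu_game_def)

lemma plr_nu_game:
  "plr (nu_game \<Gamma> G F \<nu>) (Inl g # map Inr h) = map_option (\<lambda>i. (i, fst (F g h))) (plr g h)"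
  by (simp add: nu_game_def split: option.split)

lemma chance_nu_game_Nil: "chance (nu_game \<Gamma> G F \<nu>) [] = case_sum (pmf \<nu>) (\<lambda>_. 0)"
  by (simp add: nu_game_def)

lemma chance_nu_game: "chance (nu_game \<Gamma> G F \<nu>) (Inl g # map Inr h) = on_Inr (chance g h)"
  by (simp add: nu_game_def cong: sum.case_cong)

lemma players_nu_game:
  "players (nu_game \<Gamma> G F \<nu>) = {(i, g'). i \<in> players \<Gamma> \<and> g' \<in> Gi G F i}"
  by (simp add: nu_game_def)

lemma infosets_nu_game:
  "infosets (nu_game \<Gamma> G F \<nu>) (i, g') = {nu_class G F i (F g1 h1) | g1 h1.
     g1 \<in> G \<and> h1 \<in> floor_hist F g1 \<and> dp g1 i h1 \<and> fst (F g1 h1) = g'}"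
  by (simp add: nu_game_def)

lemma util_nu_game:
  "util (nu_game \<Gamma> G F \<nu>) (i, g') (Inl g # map Inr h) = (if g = g' then util g i h else 0)"
  "util (nu_game \<Gamma> G F \<nu>) (i, g') [] = 0"
  by (simp_all add: nu_game_def)

lemma mem_nu_class_iff:
  "x \<in> nu_class G F i v \<longleftrightarrow>
     (\<exists>g h. x = Inl g # map Inr h \<and> g \<in> G \<and> h \<in> floor_hist F g \<and> dp g i h \<and> F g h = v)"
  by (auto simp: nu_class_def)

lemma Inl_Cons_in_nu_class_iff:
  "Inl g # map Inr h \<in> nu_class G F i v \<longleftrightarrow> g \<in> G \<and> h \<in> floor_hist F g \<and> dp g i h \<and> F g h = v"
  by (auto simp: nu_class_def)

lemma infosets_nu_gameE:
  assumes "I \<in> infosets (nu_game \<Gamma> G F \<nu>) (i, g')"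
  obtains g1 h1 where "I = nu_class G F i (F g1 h1)" "g1 \<in> G" "h1 \<in> floor_hist F g1"
    "dp g1 i h1" "fst (F g1 h1) = g'"
  using assms unfolding infosets_nu_game by blast

lemma nu_class_disjoint: "v \<noteq> w \<Longrightarrow> nu_class G F i v \<inter> nu_class G F i w = {}"
  by (auto simp: nu_class_def)

lemma infosets_nu_game_nonempty:
  assumes "I \<in> infosets (nu_game \<Gamma> G F \<nu>) (i, g')"
  shows "I \<noteq> {}"
proof -
  obtain g1 h1 where "I = nu_class G F i (F g1 h1)" "g1 \<in> G" "h1 \<in> floor_hist F g1" "dp g1 i h1"
    using assms by (rule infosets_nu_gameE)
  then have "Inl g1 # map Inr h1 \<in> I" by (simp add: Inl_Cons_in_nu_class_iff)
  then show ?thesis by blast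
qed

lemma infosets_nu_game_disjoint:
  assumes "I \<in> infosets (nu_game \<Gamma> G F \<nu>) (i, g')" "J \<in> infosets (nu_game \<Gamma> G F \<nu>) (i, g')"
    and "I \<noteq> J"
  shows "I \<inter> J = {}"
proof -
  obtain g1 h1 where I: "I = nu_class G F i (F g1 h1)" using assms(1) by (rule infosets_nu_gameE)
  obtain g2 h2 where J: "J = nu_class G F i (F g2 h2)" using assms(2) by (rule infosets_nu_gameE)
  have "F g1 h1 \<noteq> F g2 h2" using assms(3) unfolding I J by auto
  then show ?thesis unfolding I J by (rule nu_class_disjoint)
qed

lemma info_of_nu_game:
  assumes "g \<in> G" "h \<in> floor_hist F g" "dp g i h" "fst (F g h) = g'"
  shows "info_of (nu_game \<Gamma> G F \<nu>) (i, g') (Inl g # map Inr h) = nu_class G F i (F g h)"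
  unfolding info_of_def
proof (rule the_equality)
  show "nu_class G F i (F g h) \<in> infosets (nu_game \<Gamma> G F \<nu>) (i, g')
      \<and> Inl g # map Inr h \<in> nu_class G F i (F g h)"
    using assms unfolding infosets_nu_game Inl_Cons_in_nu_class_iff by blast
next
  fix I assume "I \<in> infosets (nu_game \<Gamma> G F \<nu>) (i, g') \<and> Inl g # map Inr h \<in> I"
  then obtain v where "I = nu_class G F i v" "Inl g # map Inr h \<in> nu_class G F i v"
    unfolding infosets_nu_game by blast
  then show "I = nu_class G F i (F g h)" by (simp add: Inl_Cons_in_nu_class_iff)
qed

lemma moves_nu_game_Nil:
  "(\<And>g. g \<in> G \<Longrightarrow> [] \<in> hist g) \<Longrightarrow> moves (nu_game \<Gamma> G F \<nu>) [] = Inl ` G"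
  using floor_hist_Nil by (auto simp: moves_def hist_nu_game)

lemma moves_nu_game:
  "moves (nu_game \<Gamma> G F \<nu>) (Inl g # map Inr h) = Inr ` {m. g \<in> G \<and> h @ [m] \<in> floor_hist F g}"
proof (rule set_eqI)
  fix mv
  show "mv \<in> moves (nu_game \<Gamma> G F \<nu>) (Inl g # map Inr h) \<longleftrightarrow>
      mv \<in> Inr ` {m. g \<in> G \<and> h @ [m] \<in> floor_hist F g}"
  proof (cases mv)
    case (Inl x)
    have "map Inr h @ [Inl x] \<noteq> map Inr h'" for h'
      by (metis Inl_Inr_False ex_map_conv in_set_conv_decomp)
    then show ?thesis using Inl by (auto simp: moves_def hist_nu_game)
  next
    case (Inr m)
    then show ?thesis
      using Inl_Cons_in_hist_nu_game[of g "h @ [m]" \<Gamma> G F \<nu>] by (auto simp: moves_def)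
  qed
qed

subsection \<open>Recall of the beliefs held along a history\<close>

definition recalled :: "('i, 'm) awF \<Rightarrow> ('i, 'm) egame \<Rightarrow> 'i \<Rightarrow> 'm list
    \<Rightarrow> (('i, 'm) egame \<times> 'm list set) set" where
  "recalled F g i h = {F g p | p. prefix p h \<and> dp g i p}"

definition recall_seq :: "('i, 'm) awF \<Rightarrow> ('i, 'm) egame \<Rightarrow> 'i \<Rightarrow> 'm list
    \<Rightarrow> ((('i, 'm) egame \<times> 'm list set) \<times> 'm) list" where
  "recall_seq F g i h =
     map (\<lambda>k. (F g (take k h), h ! k)) (filter (\<lambda>k. plr g (take k h) = Some i) [0..<length h])"

lemma recall_seq_Nil:
  assumes "\<And>r. strict_prefix r h \<Longrightarrow> plr g r \<noteq> Some i"
  shows "recall_seq F g i h = []"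
  using assms[OF strict_prefix_take] unfolding recall_seq_def by (auto simp: filter_empty_conv)

lemma recall_seq_last:
  assumes "strict_prefix q h" "plr g q = Some i"
    and last: "\<And>r. strict_prefix q r \<Longrightarrow> strict_prefix r h \<Longrightarrow> plr g r \<noteq> Some i"
  shows "recall_seq F g i h = recall_seq F g i q @ [(F g q, h ! length q)]"
proof -
  define k where "k = length q"
  have q: "q = take k h" and k: "k < length h"
    using prefix_eq_take[OF prefix_order.less_imp_le[OF assms(1)]] prefix_length_less[OF assms(1)]
    unfolding k_def by blast+
  have "[0..<length h] = [0..<k] @ k # [Suc k..<length h]"
    using k upt_add_eq_append[of 0 k "length h - k"] by (simp add: upt_conv_Cons)
  moreover have "filter (\<lambda>k'. plr g (take k' h) = Some i) [Suc k..<length h] = []"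
  proof (rule filter_False, safe)
    fix k' assume k': "k' \<in> set [Suc k..<length h]" "plr g (take k' h) = Some i"
    then show False
      using last[OF _ strict_prefix_take] strict_prefix_take_take[of k k' h] q by auto
  qed
  moreover have "filter (\<lambda>k'. plr g (take k' h) = Some i) [0..<k]
      = filter (\<lambda>k'. plr g (take k' q) = Some i) [0..<k]"
    unfolding q by (rule filter_cong) simp_all
  ultimately show ?thesis
    using assms(2) k unfolding recall_seq_def q by (simp add: min_def)
qed

definition lifts ::
  "('i, 'm) egame set \<Rightarrow> ('i, 'm) awF \<Rightarrow> 'i \<Rightarrow> ('i, 'm) egame
     \<Rightarrow> (('i, 'm) numove list \<Rightarrow> ('i, 'm) numove \<Rightarrow> real)
     \<Rightarrow> (('i, 'm) egame \<Rightarrow> 'm list \<Rightarrow> 'm \<Rightarrow> real) \<Rightarrow> bool" where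
  "lifts G F i g' t s \<longleftrightarrow> (\<forall>gh h. gh \<in> G \<longrightarrow> h \<in> floor_hist F gh \<longrightarrow> dp gh i h \<longrightarrow> fst (F gh h) = g'
     \<longrightarrow> t (Inl gh # map Inr h) = on_Inr (s gh h))"

lemma corresponds_iff_lifts: "corresponds G F \<sigma> \<sigma>' \<longleftrightarrow> (\<forall>i g'. lifts G F i g' (\<sigma> (i, g')) (\<sigma>' i g'))"
  unfolding corresponds_def lifts_def by blast

lemma corresponds_update:
  assumes "corresponds G F \<sigma> \<sigma>'" "lifts G F i g' t s"
  shows "corresponds G F (\<sigma>((i, g') := t)) (\<sigma>'(i := (\<sigma>' i)(g' := s)))"
  using assms unfolding corresponds_iff_lifts by auto

lemma local_strategyD:
  assumes "local_strategy G F i g' s" "gp \<in> G" "dp gp i h" "fst (F gp h) = g'"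
  shows "is_dist (perceived_moves (F gp h)) (s gp h)"
proof -
  have "\<forall>gp \<in> G. \<forall>h. dp gp i h \<and> fst (F gp h) = g' \<longrightarrow>
      is_dist {m. \<forall>h2 \<in> snd (F gp h). h2 @ [m] \<in> hist g'} (s gp h)"
    using assms(1) unfolding local_strategy_def by (rule conjunct1)
  then show ?thesis using assms(2-4) unfolding perceived_moves_def by simp
qed

lemma local_strategy_consistent:
  assumes "local_strategy G F i g' s" "g1 \<in> G" "g2 \<in> G" "dp g1 i h1" "dp g2 i h2"
    "fst (F g1 h1) = g'" "F g1 h1 = F g2 h2"
  shows "s g1 h1 = s g2 h2"
proof -
  have "\<forall>g1 \<in> G. \<forall>g2 \<in> G. \<forall>h1 h2.
      dp g1 i h1 \<and> dp g2 i h2 \<and> fst (F g1 h1) = g' \<and> F g1 h1 = F g2 h2 \<longrightarrow> s g1 h1 = s g2 h2"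
    using assms(1) unfolding local_strategy_def by (rule conjunct2)
  then have "dp g1 i h1 \<and> dp g2 i h2 \<and> fst (F g1 h1) = g' \<and> F g1 h1 = F g2 h2 \<longrightarrow> s g1 h1 = s g2 h2"
    using assms(2,3) by blast
  then show ?thesis using assms(4-7) by blast
qed

lemma local_strategyI:
  assumes "\<And>gp h. gp \<in> G \<Longrightarrow> dp gp i h \<Longrightarrow> fst (F gp h) = g' \<Longrightarrow>
      is_dist (perceived_moves (F gp h)) (s gp h)"
    and "\<And>g1 g2 h1 h2. g1 \<in> G \<Longrightarrow> g2 \<in> G \<Longrightarrow> dp g1 i h1 \<Longrightarrow> dp g2 i h2 \<Longrightarrow>
      fst (F g1 h1) = g' \<Longrightarrow> F g1 h1 = F g2 h2 \<Longrightarrow> s g1 h1 = s g2 h2"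
  shows "local_strategy G F i g' s"
  unfolding local_strategy_def
proof (intro conjI ballI allI impI)
  fix gp h assume "gp \<in> G" "dp gp i h \<and> fst (F gp h) = g'"
  then show "is_dist {m. \<forall>h2 \<in> snd (F gp h). h2 @ [m] \<in> hist g'} (s gp h)"
    using assms(1)[of gp h] unfolding perceived_moves_def by auto
next
  fix g1 g2 h1 h2 assume "g1 \<in> G" "g2 \<in> G"
    "dp g1 i h1 \<and> dp g2 i h2 \<and> fst (F g1 h1) = g' \<and> F g1 h1 = F g2 h2"
  then show "s g1 h1 = s g2 h2" using assms(2)[of g1 g2 h1 h2] by blast
qed

lemma gen_profile_update:
  assumes "gen_profile \<Gamma> G F \<sigma>'" "local_strategy G F i g' s"
  shows "gen_profile \<Gamma> G F (\<sigma>'(i := (\<sigma>' i)(g' := s)))"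
  using assms unfolding gen_profile_def by auto

subsection \<open>Consequences of the awareness conditions\<close>

context
  fixes \<Gamma> G Gm and F :: "('i, 'm) awF" and \<nu> :: "('i, 'm) egame pmf"
  assumes aw: "awareness_game \<Gamma> G Gm F"
begin

lemma
  assumes "g \<in> G"
  shows member_std_game: "std_game g"
    and member_finite_hist: "finite (hist g)"
    and member_players: "players g \<subseteq> players \<Gamma>"
proof -
  have "\<forall>g \<in> G. aug_game \<Gamma> g" using aw unfolding awareness_game_def by (elim conjE)
  then have "aug_game \<Gamma> g" using assms by blast
  then show "std_game g" "finite (hist g)" "players g \<subseteq> players \<Gamma>"
    unfolding aug_game_def by simp_all
qed

lemma
  assumes "gp \<in> G" "dp gp i h"
  shows aware_game_mem: "fst (F gp h) \<in> G"
    and aware_infoset: "is_infoset (fst (F gp h)) i (snd (F gp h))"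
    and aware_moves_subset: "h' \<in> snd (F gp h) \<Longrightarrow> moves (fst (F gp h)) h' \<subseteq> moves gp h"
    and aware_recall_values: "h' \<in> snd (F gp h) \<Longrightarrow>
       (\<exists>h1'. prefix h1' h' \<and> dp (fst (F gp h)) i h1' \<and> F (fst (F gp h)) h1' = v)
       \<longleftrightarrow> (\<exists>h1. prefix h1 h \<and> dp gp i h1 \<and> F gp h1 = v)"
    and aware_recall_moves: "h' \<in> snd (F gp h) \<Longrightarrow> prefix h1' h' \<Longrightarrow> dp (fst (F gp h)) i h1' \<Longrightarrow>
       prefix h1 h \<Longrightarrow> dp gp i h1 \<Longrightarrow> F (fst (F gp h)) h1' = F gp h1 \<Longrightarrow>
       prefix (h1' @ [m]) h' \<longleftrightarrow> prefix (h1 @ [m]) h"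
  using aw assms unfolding awareness_game_def Let_def
  by (fastforce simp del: prod.collapse, fastforce simp del: prod.collapse,
      fastforce simp del: prod.collapse, (cases v; fastforce), metis surj_pair)

lemma aware_infoset_nonempty: "gp \<in> G \<Longrightarrow> dp gp i h \<Longrightarrow> snd (F gp h) \<noteq> {}"
  by (rule infoset_nonempty[OF member_std_game[OF aware_game_mem] aware_infoset])

lemma recalled_aware:
  assumes "gp \<in> G" "dp gp i h" "h' \<in> snd (F gp h)"
  shows "recalled F (fst (F gp h)) i h' = recalled F gp i h"
proof (rule set_eqI)
  fix v
  show "v \<in> recalled F (fst (F gp h)) i h' \<longleftrightarrow> v \<in> recalled F gp i h"
    using aware_recall_values[OF assms, of v] unfolding recalled_def mem_Collect_eq by metis
qed

lemma recalled_eq: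
  assumes "g1 \<in> G" "dp g1 i h1" "g2 \<in> G" "dp g2 i h2" "F g1 h1 = F g2 h2"
  shows "recalled F g1 i h1 = recalled F g2 i h2"
proof -
  obtain h' where h': "h' \<in> snd (F g1 h1)" using aware_infoset_nonempty[OF assms(1,2)] by blast
  then show ?thesis
    using recalled_aware[OF assms(1,2) h'] recalled_aware[OF assms(3,4)] assms(5) by simp
qed

text \<open>A belief is held at most once along a history: otherwise the move taken after its
  first occurrence would, by the recall condition, have to be taken after the second one too.\<close>

lemma recall_inj:
  assumes "gp \<in> G" "prefix p1 h" "prefix p2 h" "dp gp i p1" "dp gp i p2" "F gp p1 = F gp p2"
  shows "p1 = p2"
proof (rule ccontr)
  have no_strict: False
    if q: "strict_prefix q1 q2" "dp gp i q1" "dp gp i q2" "F gp q1 = F gp q2" for q1 q2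
  proof -
    define m where "m = q2 ! length q1"
    obtain h'' where h'': "h'' \<in> snd (F gp q2)" using aware_infoset_nonempty[OF assms(1) q(3)] by blast
    obtain h1' where h1': "prefix h1' h''" "dp (fst (F gp q2)) i h1'" "F (fst (F gp q2)) h1' = F gp q2"
      using aware_recall_values[OF assms(1) q(3) h'', of "F gp q2"] q(3) by blast
    have "prefix (h1' @ [m]) h'' \<longleftrightarrow> prefix (q2 @ [m]) q2"
      using aware_recall_moves[OF assms(1) q(3) h'' h1'(1,2) prefix_order.refl q(3)] h1'(3) .
    moreover have "prefix (h1' @ [m]) h'' \<longleftrightarrow> prefix (q1 @ [m]) q2"
      using aware_recall_moves[OF assms(1) q(3) h'' h1'(1,2) _ q(2)] h1'(3) q(1,4)
      by (simp add: prefix_order.less_imp_le)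
    ultimately show False
      using strict_prefix_snoc_nth[OF q(1)] unfolding m_def by (simp add: prefix_def)
  qed
  assume "p1 \<noteq> p2"
  then have "strict_prefix p1 p2 \<or> strict_prefix p2 p1"
    using prefix_same_cases[OF assms(2,3)] by (auto simp: strict_prefix_def)
  then show False
    using no_strict[OF _ assms(4-6)] no_strict[OF _ assms(5,4) assms(6)[symmetric]] by blast
qed

lemma recall_next_move:
  assumes "g1 \<in> G" "dp g1 i h1" "g2 \<in> G" "dp g2 i h2" "F g1 h1 = F g2 h2"
    and "prefix q1 h1" "dp g1 i q1" "prefix q2 h2" "dp g2 i q2" "F g1 q1 = F g2 q2"
  shows "prefix (q1 @ [m]) h1 \<longleftrightarrow> prefix (q2 @ [m]) h2"
proof -
  obtain h' where h': "h' \<in> snd (F g1 h1)" using aware_infoset_nonempty[OF assms(1,2)] by blast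
  then have h'2: "h' \<in> snd (F g2 h2)" using assms(5) by simp
  obtain p where p: "prefix p h'" "dp (fst (F g1 h1)) i p" "F (fst (F g1 h1)) p = F g1 q1"
    using aware_recall_values[OF assms(1,2) h', of "F g1 q1"] assms(6,7) by blast
  have "dp (fst (F g2 h2)) i p" "F (fst (F g2 h2)) p = F g2 q2"
    using p(2,3) unfolding assms(5,10) .
  then have "prefix (p @ [m]) h' \<longleftrightarrow> prefix (q2 @ [m]) h2"
    using aware_recall_moves[OF assms(3,4) h'2 p(1) _ assms(8,9)] by blast
  moreover have "prefix (p @ [m]) h' \<longleftrightarrow> prefix (q1 @ [m]) h1"
    using aware_recall_moves[OF assms(1,2) h' p(1,2) assms(6,7) p(3)] .
  ultimately show ?thesis by simp
qed

lemma recall_corresponding_prefix: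
  assumes "g1 \<in> G" "dp g1 i h1" "g2 \<in> G" "dp g2 i h2" "F g1 h1 = F g2 h2"
    and "prefix p1 h1" "dp g1 i p1"
  obtains p2 where "prefix p2 h2" "dp g2 i p2" "F g2 p2 = F g1 p1"
    and "strict_prefix p1 h1 \<Longrightarrow> strict_prefix p2 h2"
proof -
  have "F g1 p1 \<in> recalled F g1 i h1" using assms(6,7) unfolding recalled_def by blast
  then have "F g1 p1 \<in> recalled F g2 i h2" using recalled_eq[OF assms(1-5)] by simp
  then obtain p2 where p2: "prefix p2 h2" "dp g2 i p2" "F g2 p2 = F g1 p1"
    unfolding recalled_def by auto
  have "strict_prefix p2 h2" if strict: "strict_prefix p1 h1"
  proof (rule ccontr)
    assume "\<not> strict_prefix p2 h2"
    then have "p2 = h2" using p2(1) by (simp add: strict_prefix_def)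
    then have "F g1 p1 = F g1 h1" using p2(3) assms(5) by simp
    then have "p1 = h1" by (rule recall_inj[OF assms(1,6) prefix_order.refl assms(7,2)])
    then show False using strict by simp
  qed
  with p2 show thesis by (rule that)
qed

lemma recall_prefix_mono:
  assumes "g1 \<in> G" "dp g1 i h1" "g2 \<in> G" "dp g2 i h2" "F g1 h1 = F g2 h2"
    and "prefix p1 p1'" "prefix p1' h1" "dp g1 i p1" "dp g1 i p1'"
    and "prefix p2 h2" "dp g2 i p2" "F g2 p2 = F g1 p1"
    and "prefix p2' h2" "dp g2 i p2'" "F g2 p2' = F g1 p1'"
  shows "prefix p2 p2'"
proof -
  obtain q where q: "prefix q p2'" "dp g2 i q" "F g2 q = F g1 p1"
    using recall_corresponding_prefix[OF assms(1,9,3,14) assms(15)[symmetric] assms(6,8)] by blast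
  have "q = p2"
    using recall_inj[OF assms(3) prefix_order.trans[OF q(1) assms(13)] assms(10) q(2) assms(11)]
      q(3) assms(12) by simp
  then show ?thesis using q(1) by simp
qed

lemma recall_no_decision:
  assumes "g1 \<in> G" "dp g1 i h1" "g2 \<in> G" "dp g2 i h2" "F g1 h1 = F g2 h2"
    and none1: "\<And>r. strict_prefix r h1 \<Longrightarrow> plr g1 r \<noteq> Some i"
    and r: "strict_prefix r h2"
  shows "plr g2 r \<noteq> Some i"
proof
  assume "plr g2 r = Some i"
  then have "dp g2 i r" by (rule dp_strict_prefix[OF member_std_game[OF assms(3)] dp_hist[OF assms(4)] r])
  then obtain p where "strict_prefix p h1" "dp g1 i p"
    using recall_corresponding_prefix[OF assms(3,4,1,2) assms(5)[symmetric] prefix_order.less_imp_le[OF r]] r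
    by blast
  then show False using none1 by (auto simp: dp_def)
qed

lemma recall_last_decision:
  assumes pair: "g1 \<in> G" "dp g1 i h1" "g2 \<in> G" "dp g2 i h2" "F g1 h1 = F g2 h2"
    and q1: "strict_prefix q1 h1" "dp g1 i q1"
    and last1: "\<And>r. strict_prefix q1 r \<Longrightarrow> strict_prefix r h1 \<Longrightarrow> plr g1 r \<noteq> Some i"
    and q2: "strict_prefix q2 h2" "dp g2 i q2" "F g2 q2 = F g1 q1"
    and r: "strict_prefix q2 r" "strict_prefix r h2"
  shows "plr g2 r \<noteq> Some i"
proof
  assume "plr g2 r = Some i"
  then have dr: "dp g2 i r"
    by (rule dp_strict_prefix[OF member_std_game[OF pair(3)] dp_hist[OF pair(4)] r(2)])
  obtain r1 where r1: "strict_prefix r1 h1" "dp g1 i r1" "F g1 r1 = F g2 r"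
    using recall_corresponding_prefix[OF pair(3,4,1,2) pair(5)[symmetric] prefix_order.less_imp_le[OF r(2)] dr]
      r(2) by blast
  have "prefix r1 q1 \<or> prefix q1 r1"
    using prefix_same_cases[OF prefix_order.less_imp_le[OF r1(1)] prefix_order.less_imp_le[OF q1(1)]] .
  then have "prefix r1 q1"
  proof
    assume q1r1: "prefix q1 r1"
    have "q1 \<noteq> r1"
    proof
      assume "q1 = r1"
      then have "F g2 r = F g2 q2" using r1(3) q2(3) by simp
      then have "r = q2"
        using recall_inj[OF pair(3) prefix_order.less_imp_le[OF r(2)] prefix_order.less_imp_le[OF q2(1)]
            dr q2(2)] by simp
      then show False using r(1) by simp
    qed
    then show ?thesis using q1r1 last1[of r1] r1 by (simp add: strict_prefix_def dp_def)
  qed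
  then have "prefix r q2"
    by (rule recall_prefix_mono[OF pair _ prefix_order.less_imp_le[OF q1(1)] r1(2) q1(2)
        prefix_order.less_imp_le[OF r(2)] dr r1(3)[symmetric] prefix_order.less_imp_le[OF q2(1)] q2(2,3)])
  then show False using r(1) by (simp add: prefix_order.leD)
qed

lemma recall_seq_eq:
  assumes "g1 \<in> G" "dp g1 i h1" "g2 \<in> G" "dp g2 i h2" "F g1 h1 = F g2 h2"
  shows "recall_seq F g1 i h1 = recall_seq F g2 i h2"
  using assms
proof (induction "length h1" arbitrary: g1 h1 g2 h2 rule: less_induct)
  case less
  note pair = less.prems
  show ?case
  proof (cases "\<exists>q. strict_prefix q h1 \<and> plr g1 q = Some i")
    case False
    then have "recall_seq F g1 i h1 = []" by (intro recall_seq_Nil) blast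
    moreover have "recall_seq F g2 i h2 = []"
      using recall_no_decision[OF pair] False by (intro recall_seq_Nil) blast
    ultimately show ?thesis by simp
  next
    case True
    then obtain q1 where q1: "strict_prefix q1 h1" "plr g1 q1 = Some i"
      and last1: "\<And>r. strict_prefix q1 r \<Longrightarrow> strict_prefix r h1 \<Longrightarrow> plr g1 r \<noteq> Some i"
      using ex_maximal_strict_prefix[of _ h1 "\<lambda>q. plr g1 q = Some i"] by blast
    have dq1: "dp g1 i q1"
      using dp_strict_prefix[OF member_std_game[OF pair(1)] dp_hist[OF pair(2)] q1] .
    obtain q2 where q2: "strict_prefix q2 h2" "dp g2 i q2" "F g2 q2 = F g1 q1"
      using recall_corresponding_prefix[OF pair prefix_order.less_imp_le[OF q1(1)] dq1] q1(1) by blast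
    note last2 = recall_last_decision[OF pair q1(1) dq1 last1 q2]
    have "prefix (q2 @ [h1 ! length q1]) h2"
      using recall_next_move[OF pair _ dq1 _ q2(2) q2(3)[symmetric]] strict_prefix_snoc_nth[OF q1(1)]
        q1(1) q2(1) by (meson prefix_order.less_imp_le)
    then have next_move: "h2 ! length q2 = h1 ! length q1" by (rule prefix_snoc_nth)
    have "recall_seq F g1 i q1 = recall_seq F g2 i q2"
      using less.hyps[OF prefix_length_less[OF q1(1)] pair(1) dq1 pair(3) q2(2) q2(3)[symmetric]] .
    then show ?thesis
      using recall_seq_last[OF q1 last1] recall_seq_last[OF q2(1) _ last2] q2 next_move
      by (simp add: dp_def)
  qed
qed

lemma perceived_moves_eq:
  assumes "gp \<in> G" "dp gp i h" "h' \<in> snd (F gp h)"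
  shows "perceived_moves (F gp h) = moves (fst (F gp h)) h'"
proof (rule set_eqI)
  fix m
  note infoset = member_std_game[OF aware_game_mem[OF assms(1,2)]] aware_infoset[OF assms(1,2)]
  have "h2 @ [m] \<in> hist (fst (F gp h)) \<longleftrightarrow> h' @ [m] \<in> hist (fst (F gp h))"
    if "h2 \<in> snd (F gp h)" for h2
    using infoset_moves_eq[OF infoset that assms(3)] unfolding moves_def by blast
  then show "m \<in> perceived_moves (F gp h) \<longleftrightarrow> m \<in> moves (fst (F gp h)) h'"
    using assms(3) unfolding perceived_moves_def moves_def by blast
qed

lemma perceived_moves_nonempty:
  assumes "gp \<in> G" "dp gp i h"
  shows "perceived_moves (F gp h) \<noteq> {}"
proof -
  obtain h' where h': "h' \<in> snd (F gp h)" using aware_infoset_nonempty[OF assms] by blast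
  have "dp (fst (F gp h)) i h'"
    using infoset_dp[OF member_std_game[OF aware_game_mem[OF assms]] aware_infoset[OF assms] h'] .
  then show ?thesis using perceived_moves_eq[OF assms h'] dp_moves_nonempty by simp
qed

lemma perceived_moves_subset:
  assumes "gp \<in> G" "dp gp i h"
  shows "perceived_moves (F gp h) \<subseteq> moves gp h"
proof -
  obtain h' where h': "h' \<in> snd (F gp h)" using aware_infoset_nonempty[OF assms] by blast
  show ?thesis using perceived_moves_eq[OF assms h'] aware_moves_subset[OF assms h'] by simp
qed

lemma floor_hist_moves_dp:
  assumes "g \<in> G" "h \<in> floor_hist F g" "dp g i h"
  shows "{m. h @ [m] \<in> floor_hist F g} = perceived_moves (F g h)"
proof (rule set_eqI)
  fix m
  have "plr g h = Some i" using assms(3) by (simp add: dp_def)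
  then have "h @ [m] \<in> floor_hist F g \<longleftrightarrow> h @ [m] \<in> hist g \<and> m \<in> perceived_moves (F g h)"
    using floor_hist_snoc_iff[OF assms(2), of m] by simp
  moreover have "h @ [m] \<in> hist g" if "m \<in> perceived_moves (F g h)"
    using perceived_moves_subset[OF assms(1,3)] that unfolding moves_def by blast
  ultimately show "m \<in> {m. h @ [m] \<in> floor_hist F g} \<longleftrightarrow> m \<in> perceived_moves (F g h)" by blast
qed

subsection \<open>\<Gamma>^\<nu> is a standard game with perfect recall\<close>

abbreviation \<Gamma>\<^sub>\<nu> where "\<Gamma>\<^sub>\<nu> \<equiv> nu_game \<Gamma> G F \<nu>"

lemma nonterm_nu_game:
  assumes "g \<in> G" "h \<in> floor_hist F g"
  shows "nonterm \<Gamma>\<^sub>\<nu> (Inl g # map Inr h) \<longleftrightarrow> nonterm g h"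
proof -
  have hist: "Inl g # map Inr h \<in> hist \<Gamma>\<^sub>\<nu>" "h \<in> hist g"
    using assms Inl_Cons_in_hist_nu_game floor_hist_subset by blast+
  have moves: "moves \<Gamma>\<^sub>\<nu> (Inl g # map Inr h) = Inr ` {m. h @ [m] \<in> floor_hist F g}"
    using moves_nu_game[of \<Gamma> G F \<nu> g h] assms(1) by simp
  have "{m. h @ [m] \<in> floor_hist F g} \<noteq> {} \<longleftrightarrow> moves g h \<noteq> {}"
  proof (cases "plr g h")
    case None
    then show ?thesis using floor_hist_moves_chance[OF assms(2)] by simp
  next
    case (Some i)
    have "{m. h @ [m] \<in> floor_hist F g} \<subseteq> moves g h"
      using floor_hist_subset unfolding moves_def by blast
    moreover have "{m. h @ [m] \<in> floor_hist F g} \<noteq> {}" if "moves g h \<noteq> {}"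
    proof -
      have "dp g i h" using that Some hist(2) by (simp add: dp_def nonterm_def)
      then show ?thesis
        using floor_hist_moves_dp[OF assms] perceived_moves_nonempty[OF assms(1)] by simp
    qed
    ultimately show ?thesis by blast
  qed
  then show ?thesis using moves hist unfolding nonterm_def by simp
qed

lemma dp_nu_game:
  assumes "g \<in> G" "h \<in> floor_hist F g"
  shows "dp \<Gamma>\<^sub>\<nu> (i, g') (Inl g # map Inr h) \<longleftrightarrow> dp g i h \<and> fst (F g h) = g'"
  using nonterm_nu_game[OF assms] unfolding dp_def plr_nu_game by auto

lemma moves_nu_game_dp:
  assumes "g \<in> G" "h \<in> floor_hist F g" "dp g i h"
  shows "moves \<Gamma>\<^sub>\<nu> (Inl g # map Inr h) = Inr ` perceived_moves (F g h)"
  using moves_nu_game[of \<Gamma> G F \<nu> g h] floor_hist_moves_dp[OF assms] assms(1) by simp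

lemma hist_nu_game_snoc_closed:
  assumes "hh @ [mv] \<in> hist \<Gamma>\<^sub>\<nu>"
  shows "hh \<in> hist \<Gamma>\<^sub>\<nu>"
proof (cases hh)
  case Nil
  then show ?thesis by (simp add: hist_nu_game)
next
  case (Cons x xs)
  from assms obtain g h where gh: "hh @ [mv] = Inl g # map Inr h" "g \<in> G" "h \<in> floor_hist F g"
    by (auto simp: hist_nu_game)
  then have x: "x = Inl g" and xs: "xs @ [mv] = map Inr h" using Cons by simp_all
  then obtain us vs where uv: "h = us @ vs" "xs = map Inr us"
    using map_eq_append_conv[of Inr h xs "[mv]"] by metis
  have "us \<in> floor_hist F g"
    using floor_hist_prefix_closed[OF member_std_game[OF gh(2)] gh(3)] uv(1) by (simp add: prefix_def)
  then show ?thesis using Cons x uv(2) gh(2) Inl_Cons_in_hist_nu_game by metis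
qed

lemma nu_game_no_infinite_play: "\<not> (\<exists>p. \<forall>n. map p [0..<n] \<in> hist \<Gamma>\<^sub>\<nu>)"
proof
  assume "\<exists>p. \<forall>n. map p [0..<n] \<in> hist \<Gamma>\<^sub>\<nu>"
  then obtain p where p: "\<And>n. map p [0..<n] \<in> hist \<Gamma>\<^sub>\<nu>" by blast
  have "[p 0] \<in> hist \<Gamma>\<^sub>\<nu>" using p[of 1] by simp
  then obtain g where p0: "p 0 = Inl g" and gG: "g \<in> G" by (auto simp: hist_nu_game)
  define M where "M = Max (length ` hist g)"
  have fin: "finite (length ` hist g)" using member_finite_hist[OF gG] by simp
  obtain g' h' where e: "map p [0..<M + 2] = Inl g' # map Inr h'" "h' \<in> floor_hist F g'"
    using p[of "M + 2"] by (auto simp: hist_nu_game)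
  have "p 0 = Inl g'" using arg_cong[OF e(1), of hd] by (simp del: upt_Suc add: upt_conv_Cons)
  then have "h' \<in> hist g" using e(2) floor_hist_subset p0 by auto
  moreover have "length h' = M + 1" using arg_cong[OF e(1), of length] by simp
  ultimately show False using Max_ge[OF fin] M_def by fastforce
qed

lemma nu_game_nonterm_case:
  assumes "set_pmf \<nu> \<subseteq> G" and "nonterm \<Gamma>\<^sub>\<nu> hh"
  shows "case plr \<Gamma>\<^sub>\<nu> hh of None \<Rightarrow> is_dist (moves \<Gamma>\<^sub>\<nu> hh) (chance \<Gamma>\<^sub>\<nu> hh)
           | Some j \<Rightarrow> j \<in> players \<Gamma>\<^sub>\<nu>"
proof -
  have "hh \<in> hist \<Gamma>\<^sub>\<nu>" using assms(2) by (simp add: nonterm_def)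
  then show ?thesis
  proof (cases rule: hist_nu_game_cases)
    case 1
    have "moves \<Gamma>\<^sub>\<nu> [] = Inl ` G"
      using moves_nu_game_Nil std_game_Nil[OF member_std_game] by blast
    then show ?thesis
      using 1 is_dist_pmf[OF assms(1)] by (simp add: chance_nu_game_Nil is_dist_on_Inl)
  next
    case (2 g h)
    have nt: "nonterm g h" using nonterm_nu_game[OF 2(2,3)] assms(2) 2(1) by simp
    show ?thesis
    proof (cases "plr g h")
      case None
      have "moves \<Gamma>\<^sub>\<nu> hh = Inr ` moves g h"
        using 2 moves_nu_game[of \<Gamma> G F \<nu> g h] floor_hist_moves_chance[OF 2(3) None] by simp
      then show ?thesis
        using 2(1) None std_game_chance[OF member_std_game[OF 2(2)] nt None]
        by (simp add: plr_nu_game chance_nu_game is_dist_on_Inr)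
    next
      case (Some i)
      have "i \<in> players \<Gamma>"
        using member_players[OF 2(2)] std_game_player[OF member_std_game[OF 2(2)] nt Some] by blast
      moreover have "fst (F g h) \<in> Gi G F i"
        using 2(2) nt Some unfolding Gi_def dp_def by blast
      ultimately show ?thesis using 2(1) Some by (simp add: plr_nu_game players_nu_game)
    qed
  qed
qed

lemma moves_nu_game_nu_class:
  assumes "x \<in> nu_class G F i v"
  shows "moves \<Gamma>\<^sub>\<nu> x = Inr ` perceived_moves v"
proof -
  obtain g h where "x = Inl g # map Inr h" "g \<in> G" "h \<in> floor_hist F g" "dp g i h" "F g h = v"
    using assms unfolding mem_nu_class_iff by blast
  then show ?thesis using moves_nu_game_dp by simp
qed

lemma Union_infosets_nu_game: "\<Union> (infosets \<Gamma>\<^sub>\<nu> (i, g')) = {hh. dp \<Gamma>\<^sub>\<nu> (i, g') hh}"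
proof (rule set_eqI)
  fix x
  show "x \<in> \<Union> (infosets \<Gamma>\<^sub>\<nu> (i, g')) \<longleftrightarrow> x \<in> {hh. dp \<Gamma>\<^sub>\<nu> (i, g') hh}"
  proof
    assume "x \<in> \<Union> (infosets \<Gamma>\<^sub>\<nu> (i, g'))"
    then obtain I where "I \<in> infosets \<Gamma>\<^sub>\<nu> (i, g')" "x \<in> I" by blast
    then obtain g1 h1 where "x \<in> nu_class G F i (F g1 h1)" "fst (F g1 h1) = g'"
      by (metis infosets_nu_gameE)
    then obtain g h where "x = Inl g # map Inr h" "g \<in> G" "h \<in> floor_hist F g" "dp g i h"
      "fst (F g h) = g'"
      unfolding mem_nu_class_iff by auto
    then show "x \<in> {hh. dp \<Gamma>\<^sub>\<nu> (i, g') hh}" using dp_nu_game by simp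
  next
    assume x: "x \<in> {hh. dp \<Gamma>\<^sub>\<nu> (i, g') hh}"
    then have "x \<in> hist \<Gamma>\<^sub>\<nu>" by (simp add: dp_hist)
    then show "x \<in> \<Union> (infosets \<Gamma>\<^sub>\<nu> (i, g'))"
    proof (cases rule: hist_nu_game_cases)
      case 1
      then show ?thesis using x by (simp add: dp_def)
    next
      case (2 g h)
      then have "dp g i h" "fst (F g h) = g'" using dp_nu_game x by simp_all
      then have "nu_class G F i (F g h) \<in> infosets \<Gamma>\<^sub>\<nu> (i, g')" "x \<in> nu_class G F i (F g h)"
        using 2 by (auto simp: infosets_nu_game Inl_Cons_in_nu_class_iff)
      then show ?thesis by blast
    qed
  qed
qed

lemma infosets_nu_game_moves_eq:
  assumes "I \<in> infosets \<Gamma>\<^sub>\<nu> (i, g')" "x \<in> I" "y \<in> I"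
  shows "moves \<Gamma>\<^sub>\<nu> x = moves \<Gamma>\<^sub>\<nu> y"
proof -
  obtain g1 h1 where I: "I = nu_class G F i (F g1 h1)" using assms(1) by (rule infosets_nu_gameE)
  show ?thesis using moves_nu_game_nu_class assms(2,3) unfolding I by metis
qed

lemma std_game_nu_game:
  assumes "set_pmf \<nu> \<subseteq> G"
  shows "std_game \<Gamma>\<^sub>\<nu>"
  unfolding std_game_def
proof (intro conjI ballI allI impI)
  show "[] \<in> hist \<Gamma>\<^sub>\<nu>" by (simp add: hist_nu_game)
  show "h \<in> hist \<Gamma>\<^sub>\<nu>" if "h @ [m] \<in> hist \<Gamma>\<^sub>\<nu>" for h m
    using that by (rule hist_nu_game_snoc_closed)
  show "\<not> (\<exists>p. \<forall>n. map p [0..<n] \<in> hist \<Gamma>\<^sub>\<nu>)" by (rule nu_game_no_infinite_play)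
  show "case plr \<Gamma>\<^sub>\<nu> h of None \<Rightarrow> is_dist (moves \<Gamma>\<^sub>\<nu> h) (chance \<Gamma>\<^sub>\<nu> h)
      | Some j \<Rightarrow> j \<in> players \<Gamma>\<^sub>\<nu>" if "nonterm \<Gamma>\<^sub>\<nu> h" for h
    using assms that by (rule nu_game_nonterm_case)
  fix j :: "'i \<times> ('i, 'm) egame"
  obtain i g' where j: "j = (i, g')" by (cases j)
  show "\<Union> (infosets \<Gamma>\<^sub>\<nu> j) = {h. dp \<Gamma>\<^sub>\<nu> j h}" unfolding j by (rule Union_infosets_nu_game)
  fix I assume I: "I \<in> infosets \<Gamma>\<^sub>\<nu> j"
  then show "I \<noteq> {}" unfolding j by (rule infosets_nu_game_nonempty)
  show "I \<inter> J = {}" if "J \<in> infosets \<Gamma>\<^sub>\<nu> j" "I \<noteq> J" for J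
    using I that unfolding j by (rule infosets_nu_game_disjoint)
  show "moves \<Gamma>\<^sub>\<nu> h = moves \<Gamma>\<^sub>\<nu> h'" if "h \<in> I" "h' \<in> I" for h h'
    using I that unfolding j by (rule infosets_nu_game_moves_eq)
qed

lemma experience_nu_game:
  assumes "g \<in> G" "h \<in> floor_hist F g"
  shows "experience \<Gamma>\<^sub>\<nu> (i, g') (Inl g # map Inr h)
    = map (\<lambda>(v, m). (nu_class G F i v, Inr m)) (filter (\<lambda>(v, m). fst v = g') (recall_seq F g i h))"
proof -
  let ?hh = "Inl g # map Inr h"
  let ?P = "\<lambda>k. plr g (take k h) = Some i \<and> fst (F g (take k h)) = g'"
  have std: "std_game g" using member_std_game[OF assms(1)] .
  have hg: "h \<in> hist g" using assms(2) floor_hist_subset by blast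
  have upt: "[0..<length ?hh] = 0 # map Suc [0..<length h]"
    by (simp add: map_Suc_upt upt_conv_Cons del: upt_Suc)
  have take: "take (Suc k) ?hh = Inl g # map Inr (take k h)" for k by (simp add: take_map)
  have plr: "plr \<Gamma>\<^sub>\<nu> (Inl g # map Inr (take k h)) = Some (i, g') \<longleftrightarrow> ?P k" for k
    by (auto simp: plr_nu_game)
  have "experience \<Gamma>\<^sub>\<nu> (i, g') ?hh = map (\<lambda>k. (info_of \<Gamma>\<^sub>\<nu> (i, g') (Inl g # map Inr (take k h)),
      ?hh ! Suc k)) (filter ?P [0..<length h])"
    unfolding experience_def upt by (simp add: filter_map comp_def take plr del: take_Suc_Cons)
  also have "\<dots> = map (\<lambda>k. (nu_class G F i (F g (take k h)), Inr (h ! k))) (filter ?P [0..<length h])"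
  proof (rule map_cong[OF refl])
    fix k assume "k \<in> set (filter ?P [0..<length h])"
    then have k: "k < length h" "plr g (take k h) = Some i" "fst (F g (take k h)) = g'" by auto
    have "dp g i (take k h)" using dp_strict_prefix[OF std hg strict_prefix_take[OF k(1)] k(2)] .
    moreover have "take k h \<in> floor_hist F g"
      using floor_hist_prefix_closed[OF std assms(2) take_is_prefix] .
    ultimately show "(info_of \<Gamma>\<^sub>\<nu> (i, g') (Inl g # map Inr (take k h)), ?hh ! Suc k)
        = (nu_class G F i (F g (take k h)), Inr (h ! k))"
      using info_of_nu_game[OF assms(1)] k by simp
  qed
  also have "\<dots> = map (\<lambda>(v, m). (nu_class G F i v, Inr m)) (filter (\<lambda>(v, m). fst v = g') (recall_seq F g i h))"
    unfolding recall_seq_def by (simp add: filter_map comp_def filter_filter conj_commute)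
  finally show ?thesis .
qed

lemma perfect_recall_nu_game: "perfect_recall \<Gamma>\<^sub>\<nu>"
  unfolding perfect_recall_def
proof (intro ballI)
  fix j I x y
  assume I: "I \<in> infosets \<Gamma>\<^sub>\<nu> j" and x: "x \<in> I" and y: "y \<in> I"
  obtain i g' where j: "j = (i, g')" by (cases j)
  obtain g0 h0 where I0: "I = nu_class G F i (F g0 h0)"
    using I unfolding j by (rule infosets_nu_gameE)
  then obtain g1 h1 g2 h2 where x1: "x = Inl g1 # map Inr h1" "g1 \<in> G" "h1 \<in> floor_hist F g1"
      "dp g1 i h1" "F g1 h1 = F g0 h0"
    and y2: "y = Inl g2 # map Inr h2" "g2 \<in> G" "h2 \<in> floor_hist F g2" "dp g2 i h2" "F g2 h2 = F g0 h0"
    using x y unfolding I0 mem_nu_class_iff by blast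
  have "recall_seq F g1 i h1 = recall_seq F g2 i h2"
    using recall_seq_eq[OF x1(2,4) y2(2,4)] x1(5) y2(5) by simp
  then show "experience \<Gamma>\<^sub>\<nu> j x = experience \<Gamma>\<^sub>\<nu> j y"
    unfolding j x1(1) y2(1) using experience_nu_game x1(2,3) y2(2,3) by simp
qed

subsection \<open>Expected utilities in \<Gamma>^\<nu>\<close>

lemma Gi_subset: "Gi G F i \<subseteq> G"
  unfolding Gi_def using aware_game_mem by blast

lemma reach_nu_game:
  assumes "g \<in> G" "z \<in> floor_hist F g" "corresponds G F \<tau> \<tau>'"
  shows "reach \<Gamma>\<^sub>\<nu> \<tau> (Inl g # map Inr z) = pmf \<nu> g * greach F g \<tau>' z"
proof -
  let ?hh = "Inl g # map Inr z"
  define c where "c k = (case plr \<Gamma>\<^sub>\<nu> (take k ?hh) of None \<Rightarrow> chance \<Gamma>\<^sub>\<nu> (take k ?hh) (?hh ! k)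
                              | Some j \<Rightarrow> \<tau> j (take k ?hh) (?hh ! k))" for k
  have std: "std_game g" using member_std_game[OF assms(1)] .
  have hg: "z \<in> hist g" using assms(2) floor_hist_subset by blast
  have "reach \<Gamma>\<^sub>\<nu> \<tau> ?hh = (\<Prod>k<Suc (length z). c k)" unfolding reach_def c_def by simp
  also have "\<dots> = c 0 * (\<Prod>k<length z. c (Suc k))" by (rule prod.lessThan_Suc_shift)
  also have "c 0 = pmf \<nu> g" unfolding c_def by (simp add: chance_nu_game_Nil)
  also have "(\<Prod>k<length z. c (Suc k)) = greach F g \<tau>' z"
    unfolding greach_def
  proof (rule prod.cong[OF refl])
    fix k assume "k \<in> {..<length z}"
    then have k: "k < length z" by simp
    have take: "take (Suc k) ?hh = Inl g # map Inr (take k z)" by (simp add: take_map)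
    show "c (Suc k) = (case plr g (take k z) of None \<Rightarrow> chance g (take k z) (z ! k)
         | Some j \<Rightarrow> \<tau>' j (fst (F g (take k z))) g (take k z) (z ! k))"
    proof (cases "plr g (take k z)")
      case None
      then show ?thesis using k unfolding c_def take by (simp add: plr_nu_game chance_nu_game)
    next
      case (Some j)
      have "dp g j (take k z)" using dp_strict_prefix[OF std hg strict_prefix_take[OF k] Some] .
      moreover have "take k z \<in> floor_hist F g"
        using floor_hist_prefix_closed[OF std assms(2) take_is_prefix] .
      ultimately show ?thesis
        using assms(1,3) Some k unfolding c_def take corresponds_def by (simp add: plr_nu_game)
    qed
  qed
  finally show ?thesis .
qed

text \<open>A history outside the floor contains a move that its mover does not perceive, and local
  strategies put no weight on such moves.\<close>

lemma greach_outside_floor: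
  assumes "g \<in> G" "z \<in> hist g" "z \<notin> floor_hist F g" "gen_profile \<Gamma> G F \<tau>'"
  shows "greach F g \<tau>' z = 0"
proof -
  obtain h1 m j where hm: "prefix (h1 @ [m]) z" "plr g h1 = Some j"
    and "\<not> (\<forall>h2 \<in> snd (F g h1). h2 @ [m] \<in> hist (fst (F g h1)))"
    using assms(2,3) unfolding floor_hist_def by auto
  then have unaware: "m \<notin> perceived_moves (F g h1)" by (simp add: perceived_moves_def)
  have pz: "strict_prefix h1 z" using hm(1) by (rule prefix_snocD)
  have k: "length h1 < length z" and tk: "take (length h1) z = h1" and nk: "z ! length h1 = m"
    using prefix_length_less[OF pz] prefix_eq_take[OF prefix_order.less_imp_le[OF pz]]
      prefix_snoc_nth[OF hm(1)] by simp_all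
  have d: "dp g j h1" using dp_strict_prefix[OF member_std_game[OF assms(1)] assms(2) pz hm(2)] .
  have "j \<in> players \<Gamma>" using member_players[OF assms(1)] dp_player[OF member_std_game[OF assms(1)] d]
    by blast
  moreover have "fst (F g h1) \<in> Gi G F j" unfolding Gi_def using assms(1) d by blast
  ultimately have "local_strategy G F j (fst (F g h1)) (\<tau>' j (fst (F g h1)))"
    using assms(4) unfolding gen_profile_def by blast
  then have "is_dist (perceived_moves (F g h1)) (\<tau>' j (fst (F g h1)) g h1)"
    by (rule local_strategyD[OF _ assms(1) d refl])
  then have "\<tau>' j (fst (F g h1)) g h1 m = 0" using unaware unfolding is_dist_def by blast
  then show ?thesis
    unfolding greach_def using k tk nk hm(2) by (intro prod_zero bexI[of _ "length h1"]) simp_all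
qed

lemma terminal_nu_game:
  assumes "g \<in> G" "z \<in> floor_hist F g"
  shows "terminal \<Gamma>\<^sub>\<nu> (Inl g # map Inr z) \<longleftrightarrow> terminal g z"
  using nonterm_nu_game[OF assms] assms Inl_Cons_in_hist_nu_game floor_hist_subset
  unfolding terminal_def nonterm_def by blast

lemma EU_nu_game:
  assumes "g \<in> G" "corresponds G F \<tau> \<tau>'" "gen_profile \<Gamma> G F \<tau>'"
  shows "EU \<Gamma>\<^sub>\<nu> \<tau> (i, g) = pmf \<nu> g * GEU F g \<tau>' i"
proof -
  define f where "f zz = reach \<Gamma>\<^sub>\<nu> \<tau> zz * util \<Gamma>\<^sub>\<nu> (i, g) zz" for zz
  define A where "A = {z. terminal g z \<and> z \<in> floor_hist F g}"
  have fin: "finite {z. terminal g z}"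
    using member_finite_hist[OF assms(1)] by (rule finite_subset[rotated]) (auto simp: terminal_def)
  then have finA: "finite A" unfolding A_def by (rule finite_subset[rotated]) auto
  have "EU \<Gamma>\<^sub>\<nu> \<tau> (i, g) = infsum f {zz. terminal \<Gamma>\<^sub>\<nu> zz}" unfolding EU_def f_def by simp
  also have "\<dots> = infsum f ((\<lambda>z. Inl g # map Inr z) ` A)"
  proof (rule infsum_cong_neutral)
    fix x assume "x \<in> {zz. terminal \<Gamma>\<^sub>\<nu> zz} - (\<lambda>z. Inl g # map Inr z) ` A"
    then have x: "terminal \<Gamma>\<^sub>\<nu> x" "x \<notin> (\<lambda>z. Inl g # map Inr z) ` A" by auto
    from x(1) have "x \<in> hist \<Gamma>\<^sub>\<nu>" by (simp add: terminal_def)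
    then show "f x = 0"
    proof (cases rule: hist_nu_game_cases)
      case (2 g2 h)
      then have "g2 \<noteq> g" using x terminal_nu_game unfolding A_def by auto
      then show ?thesis using 2(1) by (simp add: f_def util_nu_game)
    qed (simp add: f_def util_nu_game)
  qed (use terminal_nu_game[OF assms(1)] in \<open>auto simp: A_def\<close>)
  also have "\<dots> = (\<Sum>z\<in>A. f (Inl g # map Inr z))"
    using finA by (simp add: sum.reindex inj_on_def)
  also have "\<dots> = (\<Sum>z\<in>A. pmf \<nu> g * (greach F g \<tau>' z * util g i z))"
    using reach_nu_game[OF assms(1) _ assms(2)] unfolding A_def by (simp add: f_def util_nu_game mult.assoc)
  also have "\<dots> = pmf \<nu> g * GEU F g \<tau>' i"
    unfolding GEU_def sum_distrib_left[symmetric]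
    using greach_outside_floor[OF assms(1) _ _ assms(3)]
    by (intro arg_cong[where f = "(*) _"] sum.mono_neutral_left[OF fin])
      (auto simp: A_def terminal_def)
  finally show ?thesis .
qed

subsection \<open>Nash equilibria of \<Gamma>^\<nu>\<close>

lemma behavioral_nu_gameD:
  assumes "behavioral \<Gamma>\<^sub>\<nu> (i, g') t" "x \<in> nu_class G F i v" "fst v = g'"
  shows "t x = on_Inr (t x \<circ> Inr)" "is_dist (perceived_moves v) (t x \<circ> Inr)"
    and "y \<in> nu_class G F i v \<Longrightarrow> t y = t x"
proof -
  obtain g h where x: "x = Inl g # map Inr h" "g \<in> G" "h \<in> floor_hist F g" "dp g i h" "F g h = v"
    using assms(2) unfolding mem_nu_class_iff by blast
  then have "dp \<Gamma>\<^sub>\<nu> (i, g') x" using dp_nu_game assms(3) by simp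
  then have "is_dist (moves \<Gamma>\<^sub>\<nu> x) (t x)" using assms(1) unfolding behavioral_def by blast
  then have "is_dist (Inr ` perceived_moves v) (t x)" using moves_nu_game_nu_class[OF assms(2)] by simp
  then show "t x = on_Inr (t x \<circ> Inr)" "is_dist (perceived_moves v) (t x \<circ> Inr)"
    using is_dist_Inr_image_eq is_dist_on_Inr by metis+
  have "nu_class G F i v \<in> infosets \<Gamma>\<^sub>\<nu> (i, g')"
    using x assms(3) unfolding infosets_nu_game by blast
  then show "y \<in> nu_class G F i v \<Longrightarrow> t y = t x"
    using assms(1,2) unfolding behavioral_def by blast
qed

lemma behavioral_of_local_strategy:
  assumes "local_strategy G F i g' s" "lifts G F i g' t s"
  shows "behavioral \<Gamma>\<^sub>\<nu> (i, g') t"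
  unfolding behavioral_def
proof (intro conjI allI impI ballI)
  fix hh assume d: "dp \<Gamma>\<^sub>\<nu> (i, g') hh"
  then have "hh \<in> hist \<Gamma>\<^sub>\<nu>" by (rule dp_hist)
  then show "is_dist (moves \<Gamma>\<^sub>\<nu> hh) (t hh)"
  proof (cases rule: hist_nu_game_cases)
    case 1
    then show ?thesis using d by (simp add: dp_def)
  next
    case (2 gh h)
    then have "dp gh i h" "fst (F gh h) = g'" using dp_nu_game d by simp_all
    then show ?thesis
      using 2 assms moves_nu_game_dp local_strategyD
      by (simp add: lifts_def is_dist_on_Inr)
  qed
next
  fix I x y assume "I \<in> infosets \<Gamma>\<^sub>\<nu> (i, g')" "x \<in> I" "y \<in> I"
  then obtain g1 h1 where I: "I = nu_class G F i (F g1 h1)" "fst (F g1 h1) = g'"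
    by (metis infosets_nu_gameE)
  obtain a b c d where
    x: "x = Inl a # map Inr b" "a \<in> G" "b \<in> floor_hist F a" "dp a i b" "F a b = F g1 h1" and
    y: "y = Inl c # map Inr d" "c \<in> G" "d \<in> floor_hist F c" "dp c i d" "F c d = F g1 h1"
    using \<open>x \<in> I\<close> \<open>y \<in> I\<close> unfolding I mem_nu_class_iff by blast
  have "s a b = s c d" using local_strategy_consistent[OF assms(1) x(2) y(2) x(4) y(4)] x(5) y(5) I(2)
    by simp
  then show "t x = t y" using assms(2) x y I(2) unfolding lifts_def by simp
qed

text \<open>The local strategy reads a behavioural strategy of (i, g') off an arbitrary history of the
  information set nu_class G F i (F gp h); when that class is empty, no history of the floor
  carries the belief F gp h and any fixed local strategy serves.\<close>

lemma local_strategy_of_behavioral: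
  assumes t: "behavioral \<Gamma>\<^sub>\<nu> (i, g') t" and dflt: "local_strategy G F i g' dflt"
  obtains s where "local_strategy G F i g' s" "lifts G F i g' t s"
proof -
  define s where "s gp h = (if nu_class G F i (F gp h) \<noteq> {}
      then t (SOME x. x \<in> nu_class G F i (F gp h)) \<circ> Inr else dflt gp h)" for gp h
  have pick: "(SOME x. x \<in> nu_class G F i v) \<in> nu_class G F i v" if "nu_class G F i v \<noteq> {}" for v
    using that by (simp add: some_in_eq)
  have "local_strategy G F i g' s"
  proof (rule local_strategyI)
    fix gp h assume gp: "gp \<in> G" "dp gp i h" "fst (F gp h) = g'"
    show "is_dist (perceived_moves (F gp h)) (s gp h)"
    proof (cases "nu_class G F i (F gp h) = {}")
      case True
      then show ?thesis using local_strategyD[OF dflt gp] unfolding s_def by simp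
    next
      case False
      then show ?thesis using behavioral_nu_gameD(2)[OF t pick[OF False] gp(3)] unfolding s_def by simp
    qed
  next
    fix g1 g2 h1 h2 assume "g1 \<in> G" "g2 \<in> G" "dp g1 i h1" "dp g2 i h2"
      "fst (F g1 h1) = g'" "F g1 h1 = F g2 h2"
    moreover have "dflt g1 h1 = dflt g2 h2"
      using local_strategy_consistent[OF dflt calculation] .
    ultimately show "s g1 h1 = s g2 h2" unfolding s_def by simp
  qed
  moreover have "lifts G F i g' t s"
    unfolding lifts_def
  proof (intro allI impI)
    fix gh h assume gh: "gh \<in> G" "h \<in> floor_hist F gh" "dp gh i h" "fst (F gh h) = g'"
    then have x: "Inl gh # map Inr h \<in> nu_class G F i (F gh h)"
      by (simp add: Inl_Cons_in_nu_class_iff)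
    then have ne: "nu_class G F i (F gh h) \<noteq> {}" by blast
    have "t (SOME x. x \<in> nu_class G F i (F gh h)) = t (Inl gh # map Inr h)"
      using behavioral_nu_gameD(3)[OF t x gh(4) pick[OF ne]] .
    then have "s gh h = t (Inl gh # map Inr h) \<circ> Inr" unfolding s_def using ne by simp
    then show "t (Inl gh # map Inr h) = on_Inr (s gh h)"
      using behavioral_nu_gameD(1)[OF t x gh(4)] by simp
  qed
  ultimately show thesis by (rule that)
qed

text \<open>A unilateral deviation of agent (i, g') changes only its own payoff, which is that of
  i in g' scaled by the positive weight pmf \<nu> g'.\<close>

lemma EU_nu_game_deviation_le_iff:
  assumes pos: "\<forall>g \<in> G. pmf \<nu> g > 0"
    and prof: "gen_profile \<Gamma> G F \<sigma>'" and corr: "corresponds G F \<sigma> \<sigma>'"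
    and "g' \<in> Gi G F i" "local_strategy G F i g' s" "lifts G F i g' t s"
  shows "EU \<Gamma>\<^sub>\<nu> (\<sigma>((i, g') := t)) (i, g') \<le> EU \<Gamma>\<^sub>\<nu> \<sigma> (i, g') \<longleftrightarrow>
      GEU F g' (\<sigma>'(i := (\<sigma>' i)(g' := s))) i \<le> GEU F g' \<sigma>' i"
proof -
  have "g' \<in> G" using assms(4) Gi_subset by blast
  then show ?thesis
    using EU_nu_game[OF _ corresponds_update[OF corr assms(6)] gen_profile_update[OF prof assms(5)]]
      EU_nu_game[OF _ corr prof] pos by simp
qed

lemma nash_nu_game_iff_gen_nash:
  assumes pos: "\<forall>g \<in> G. pmf \<nu> g > 0"
    and prof: "gen_profile \<Gamma> G F \<sigma>'" and corr: "corresponds G F \<sigma> \<sigma>'"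
  shows "nash \<Gamma>\<^sub>\<nu> \<sigma> \<longleftrightarrow> gen_nash \<Gamma> G F \<sigma>'"
proof -
  have local: "local_strategy G F i g' (\<sigma>' i g')" if "i \<in> players \<Gamma>" "g' \<in> Gi G F i" for i g'
    using prof that unfolding gen_profile_def by blast
  have lifts: "lifts G F i g' (\<sigma> (i, g')) (\<sigma>' i g')" for i g'
    using corr unfolding corresponds_iff_lifts by blast
  note deviation = EU_nu_game_deviation_le_iff[OF pos prof corr]
  show ?thesis
  proof
    assume nash: "nash \<Gamma>\<^sub>\<nu> \<sigma>"
    show "gen_nash \<Gamma> G F \<sigma>'"
      unfolding gen_nash_def
    proof (intro conjI ballI allI impI)
      fix i g' s assume i: "i \<in> players \<Gamma>" "g' \<in> Gi G F i" and s: "local_strategy G F i g' s"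
      define t :: "('i, 'm) numove list \<Rightarrow> ('i, 'm) numove \<Rightarrow> real"
        where "t hh = on_Inr (s (projl (hd hh)) (dec (tl hh)))" for hh
      have t: "lifts G F i g' t s" unfolding lifts_def t_def by simp
      moreover have "behavioral \<Gamma>\<^sub>\<nu> (i, g') t" by (rule behavioral_of_local_strategy[OF s t])
      ultimately show "GEU F g' (\<sigma>'(i := (\<sigma>' i)(g' := s))) i \<le> GEU F g' \<sigma>' i"
        using nash i deviation[OF i(2) s] unfolding nash_def players_nu_game by blast
    qed (rule prof)
  next
    assume gen_nash: "gen_nash \<Gamma> G F \<sigma>'"
    show "nash \<Gamma>\<^sub>\<nu> \<sigma>"
      unfolding nash_def profile_def players_nu_game
    proof (intro conjI ballI allI impI; clarify)
      fix i g' assume "i \<in> players \<Gamma>" "g' \<in> Gi G F i"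
      then show "behavioral \<Gamma>\<^sub>\<nu> (i, g') (\<sigma> (i, g'))"
        using behavioral_of_local_strategy local lifts by blast
    next
      fix i g' t assume i: "i \<in> players \<Gamma>" "g' \<in> Gi G F i" and t: "behavioral \<Gamma>\<^sub>\<nu> (i, g') t"
      obtain s where "local_strategy G F i g' s" "lifts G F i g' t s"
        using local_strategy_of_behavioral[OF t local[OF i]] .
      then show "EU \<Gamma>\<^sub>\<nu> (\<sigma>((i, g') := t)) (i, g') \<le> EU \<Gamma>\<^sub>\<nu> \<sigma> (i, g')"
        using gen_nash i deviation[OF i(2)] unfolding gen_nash_def by blast
    qed
  qed
qed

end

theorem theorem3p1:
  fixes \<Gamma> :: "('i, 'm) egame" and G :: "('i, 'm) egame set" and Gm :: "('i, 'm) egame"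
    and F :: "('i, 'm) awF" and \<nu> :: "('i, 'm) egame pmf"
  assumes "awareness_game \<Gamma> G Gm F"
    and "set_pmf \<nu> \<subseteq> G"
  shows "std_game (nu_game \<Gamma> G F \<nu>) \<and> perfect_recall (nu_game \<Gamma> G F \<nu>)
       \<and> ((\<forall>g \<in> G. pmf \<nu> g > 0) \<longrightarrow>
            (\<forall>\<sigma> \<sigma>'. gen_profile \<Gamma> G F \<sigma>' \<and> corresponds G F \<sigma> \<sigma>' \<longrightarrow>
               (nash (nu_game \<Gamma> G F \<nu>) \<sigma> \<longleftrightarrow> gen_nash \<Gamma> G F \<sigma>')))"
  using std_game_nu_game[OF assms] perfect_recall_nu_game[OF assms(1)]
    nash_nu_game_iff_gen_nash[OF assms(1)] by blast

end
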